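(* Let $(\psi(y,z),y,z)$ be a timelike Born-Infeld soliton surface in $\mathbb{L}^3$ without singularities. Then for any point at which its Gauss curvature is nonzero there is an open neighbourhood, parameters $(r,s)$, and two $C^2$ functions $F$ and $G$ of one variable such that on that neighbourhood the surface is represented as $$y-z=F(r)-\int s^2G'(s)\,ds,\qquad y+z=G(s)-\int r^2F'(r)\,dr,\qquad \psi(y,z)=\int rF'(r)\,dr+\int sG'(s)\,ds.$$ Conversely, any graph-like surface $(\psi(y,z),y,z)$ represented in this way is a Born-Infeld soliton surface.
   Context: $\mathbb{L}^3$ denotes $\mathbb{R}^3$ with the metric $ds^2=dx^2+dy^2-dz^2$. A Born-Infeld soliton surface is a surface $(\psi(y,z),y,z)$ where $\psi$ satisfies the Born-Infeld equation $(1-\psi_z^2)\psi_{yy}+2\psi_y\psi_z\psi_{yz}-(1+\psi_y^2)\psi_{zz}=0$; it is timelike without singularities when $\psi_y^2-\psi_z^2+1>0$ everywhere. Its Gauss curvature is $K=\frac{\psi_{yy}\psi_{zz}-\psi_{yz}^2}{(\psi_y^2-\psi_z^2+1)^2}$. The integrals denote (fixed) antiderivatives. *)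

theory Defs
  imports "HOL-Analysis.Analysis"
begin

definition pdy :: "(real \<Rightarrow> real \<Rightarrow> real) \<Rightarrow> real \<Rightarrow> real \<Rightarrow> real" where
  "pdy f y z = deriv (\<lambda>t. f t z) y"

definition pdz :: "(real \<Rightarrow> real \<Rightarrow> real) \<Rightarrow> real \<Rightarrow> real \<Rightarrow> real" where
  "pdz f y z = deriv (\<lambda>t. f y t) z"

fun Ck_on :: "nat \<Rightarrow> (real \<times> real) set \<Rightarrow> (real \<Rightarrow> real \<Rightarrow> real) \<Rightarrow> bool" where
  "Ck_on 0 U f = continuous_on U (\<lambda>(y, z). f y z)"
| "Ck_on (Suc k) U f =
     ((\<lambda>(y, z). f y z) differentiable_on U \<and> Ck_on k U (pdy f) \<and> Ck_on k U (pdz f))"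

definition smooth_on2 :: "(real \<times> real) set \<Rightarrow> (real \<Rightarrow> real \<Rightarrow> real) \<Rightarrow> bool" where
  "smooth_on2 U f \<longleftrightarrow> (\<forall>k. Ck_on k U f)"

definition C2_on1 :: "real set \<Rightarrow> (real \<Rightarrow> real) \<Rightarrow> bool" where
  "C2_on1 I F \<longleftrightarrow> F differentiable_on I \<and> deriv F differentiable_on I
                   \<and> continuous_on I (deriv (deriv F))"

definition BI_eq :: "(real \<Rightarrow> real \<Rightarrow> real) \<Rightarrow> real \<Rightarrow> real \<Rightarrow> bool" where
  "BI_eq psi y z \<longleftrightarrow>
     (1 - (pdz psi y z)\<^sup>2) * pdy (pdy psi) y z
     + 2 * pdy psi y z * pdz psi y z * pdz (pdy psi) y z
     - (1 + (pdy psi y z)\<^sup>2) * pdz (pdz psi) y z = 0"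

definition gauss_curv :: "(real \<Rightarrow> real \<Rightarrow> real) \<Rightarrow> real \<Rightarrow> real \<Rightarrow> real" where
  "gauss_curv psi y z =
     (pdy (pdy psi) y z * pdz (pdz psi) y z - (pdz (pdy psi) y z)\<^sup>2)
     / ((pdy psi y z)\<^sup>2 - (pdz psi y z)\<^sup>2 + 1)\<^sup>2"

definition param_chart :: "(real \<times> real) set \<Rightarrow> (real \<Rightarrow> real \<Rightarrow> real) \<Rightarrow> (real \<Rightarrow> real \<Rightarrow> real) \<Rightarrow> bool" where
  "param_chart U r s \<longleftrightarrow> Ck_on 1 U r \<and> Ck_on 1 U s
     \<and> inj_on (\<lambda>(y, z). (r y z, s y z)) U
     \<and> (\<forall>(y, z)\<in>U. pdy r y z * pdz s y z - pdz r y z * pdy s y z \<noteq> 0)"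

text \<open>The representation of the theorem on U, with C^2 functions F, G and fixed
  antiderivatives A of s^2 G'(s), B of r^2 F'(r), C of r F'(r), D of s G'(s).\<close>
definition BI_rep :: "(real \<Rightarrow> real \<Rightarrow> real) \<Rightarrow> (real \<times> real) set
     \<Rightarrow> (real \<Rightarrow> real \<Rightarrow> real) \<Rightarrow> (real \<Rightarrow> real \<Rightarrow> real)
     \<Rightarrow> (real \<Rightarrow> real) \<Rightarrow> (real \<Rightarrow> real) \<Rightarrow> (real \<Rightarrow> real) \<Rightarrow> (real \<Rightarrow> real)
     \<Rightarrow> (real \<Rightarrow> real) \<Rightarrow> (real \<Rightarrow> real) \<Rightarrow> bool" where
  "BI_rep psi U r s F G A B C D \<longleftrightarrow>
     (\<exists>I J. open I \<and> open J
        \<and> (\<forall>(y, z)\<in>U. r y z \<in> I \<and> s y z \<in> J)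
        \<and> C2_on1 I F \<and> C2_on1 J G
        \<and> (\<forall>x\<in>J. (A has_real_derivative x\<^sup>2 * deriv G x) (at x))
        \<and> (\<forall>x\<in>I. (B has_real_derivative x\<^sup>2 * deriv F x) (at x))
        \<and> (\<forall>x\<in>I. (C has_real_derivative x * deriv F x) (at x))
        \<and> (\<forall>x\<in>J. (D has_real_derivative x * deriv G x) (at x))
        \<and> (\<forall>(y, z)\<in>U.
             y - z = F (r y z) - A (s y z)
           \<and> y + z = G (s y z) - B (r y z)
           \<and> psi y z = C (r y z) + D (s y z)))"

end

(* Where the surface is timelike, the gradient of psi can be written as
   psi_y = (r + s) / (1 - r s) and psi_z = (s - r) / (1 - r s) with r s < 1.  In these Riemann
   invariants the Born-Infeld equation, together with the symmetry of the Hessian of psi, becomes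
   the pair of transport equations (1 + s^2) r_z + (1 - s^2) r_y = 0 and
   (1 + r^2) s_z - (1 - r^2) s_y = 0, and the Hessian determinant of psi is a nonzero multiple of
   the Jacobian of (r, s).  So where the Gauss curvature is nonzero, (r, s) are local coordinates.
   In them X = y - z and W = y + z satisfy X_s = - s^2 W_s and W_r = - r^2 X_r; as r^2 s^2 < 1
   this forces X_rs = W_rs = 0, so X = F(r) - A(s) and W = G(s) - B(r) with A' = s^2 G' and
   B' = r^2 F'.  Likewise psi_r = r X_r and psi_s = s W_s split psi as C(r) + D(s).
   Conversely, differentiating the representation gives a linear system for the partials of r
   and s whose solution yields the same expression of the gradient and the transport equations,
   hence the Born-Infeld equation. *)

theory Submission
  imports Defs
begin

section \<open>Partial derivatives of functions of two variables\<close>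

lemma pdy_eqI: "((\<lambda>t. f t z) has_real_derivative D) (at y) \<Longrightarrow> pdy f y z = D"
  unfolding pdy_def by (rule DERIV_imp_deriv)

lemma pdz_eqI: "((\<lambda>t. f y t) has_real_derivative D) (at z) \<Longrightarrow> pdz f y z = D"
  unfolding pdz_def by (rule DERIV_imp_deriv)

lemma differentiable_has_partials:
  fixes f :: "real \<Rightarrow> real \<Rightarrow> real"
  assumes "case_prod f differentiable (at (y, z))"
  shows "((\<lambda>t. f t z) has_real_derivative pdy f y z) (at y)"
    and "((\<lambda>t. f y t) has_real_derivative pdz f y z) (at z)"
    and "(case_prod f has_derivative (\<lambda>(h, k). pdy f y z * h + pdz f y z * k)) (at (y, z))"
proof -
  obtain D where D: "(case_prod f has_derivative D) (at (y, z))"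
    using assms by (auto simp: differentiable_def)
  have lin: "linear D" using D by (rule has_derivative_linear)
  have D_y: "D \<circ> (\<lambda>h. (h, 0)) = (\<lambda>h. D (1, 0) * h)"
  proof
    fix h show "(D \<circ> (\<lambda>h. (h, 0))) h = D (1, 0) * h"
      using linear_scale[OF lin, of h "(1, 0)"] by (simp add: mult.commute)
  qed
  have D_z: "D \<circ> (\<lambda>k. (0, k)) = (\<lambda>k. D (0, 1) * k)"
  proof
    fix k show "(D \<circ> (\<lambda>k. (0, k))) k = D (0, 1) * k"
      using linear_scale[OF lin, of k "(0, 1)"] by (simp add: mult.commute)
  qed
  have "((case_prod f \<circ> (\<lambda>t. (t, z))) has_derivative D \<circ> (\<lambda>h. (h, 0))) (at y)"
    by (rule diff_chain_at) (use D in \<open>auto intro!: derivative_eq_intros\<close>)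
  then have dy: "((\<lambda>t. f t z) has_real_derivative D (1, 0)) (at y)"
    unfolding D_y by (simp add: has_field_derivative_def o_def)
  have "((case_prod f \<circ> (\<lambda>t. (y, t))) has_derivative D \<circ> (\<lambda>k. (0, k))) (at z)"
    by (rule diff_chain_at) (use D in \<open>auto intro!: derivative_eq_intros\<close>)
  then have dz: "((\<lambda>t. f y t) has_real_derivative D (0, 1)) (at z)"
    unfolding D_z by (simp add: has_field_derivative_def o_def)
  have py: "pdy f y z = D (1, 0)" and pz: "pdz f y z = D (0, 1)"
    using dy dz by (auto intro: pdy_eqI pdz_eqI)
  show "((\<lambda>t. f t z) has_real_derivative pdy f y z) (at y)"
    and "((\<lambda>t. f y t) has_real_derivative pdz f y z) (at z)"
    using dy dz by (simp_all only: py pz)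
  have "D = (\<lambda>(h, k). pdy f y z * h + pdz f y z * k)"
  proof
    fix v :: "real \<times> real"
    obtain h k where v: "v = (h, k)" by fastforce
    have "D (h, k) = D (h, 0) + D (0, k)"
      using linear_add[OF lin, of "(h, 0)" "(0, k)"] by simp
    then show "D v = (\<lambda>(h, k). pdy f y z * h + pdz f y z * k) v"
      using fun_cong[OF D_y, of h] fun_cong[OF D_z, of k] by (simp add: v py pz)
  qed
  with D show "(case_prod f has_derivative (\<lambda>(h, k). pdy f y z * h + pdz f y z * k)) (at (y, z))"
    by simp
qed

lemma eventually_nhds_sections:
  assumes "open U" "(y, z) \<in> U"
  shows "\<forall>\<^sub>F t in nhds y. (t, z) \<in> U" and "\<forall>\<^sub>F t in nhds z. (y, t) \<in> U"
proof -
  have "open ((\<lambda>t. (t, z)) -` U)" "open ((\<lambda>t. (y, t)) -` U)"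
    using assms(1) by (auto intro!: open_vimage continuous_intros)
  then show "\<forall>\<^sub>F t in nhds y. (t, z) \<in> U" and "\<forall>\<^sub>F t in nhds z. (y, t) \<in> U"
    using eventually_nhds_in_open assms(2) by fastforce+
qed

lemma pdy_pdz_cong:
  assumes "open U" "(y, z) \<in> U" "\<And>a b. (a, b) \<in> U \<Longrightarrow> f a b = g a b"
  shows "pdy f y z = pdy g y z" and "pdz f y z = pdz g y z"
  unfolding pdy_def pdz_def using eventually_nhds_sections[OF assms(1,2)] assms(3)
  by (auto intro!: deriv_cong_ev elim: eventually_mono)

lemma differentiable_on_cong_open:
  assumes "open U" "\<And>a b. (a, b) \<in> U \<Longrightarrow> f a b = g a b" "case_prod f differentiable_on U"
  shows "case_prod g differentiable_on U"
  unfolding differentiable_on_eq_differentiable_at[OF assms(1)] differentiable_def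
proof
  fix x assume x: "x \<in> U"
  then obtain D where "(case_prod f has_derivative D) (at x)"
    using assms(1,3) by (auto simp: differentiable_on_eq_differentiable_at differentiable_def)
  then have "(case_prod g has_derivative D) (at x)"
    by (rule has_derivative_transform_within_open[OF _ assms(1) x]) (use assms(2) in auto)
  then show "\<exists>D. (case_prod g has_derivative D) (at x)" by blast
qed

lemma Ck_on_cong:
  assumes "open U" "\<And>a b. (a, b) \<in> U \<Longrightarrow> f a b = g a b"
  shows "Ck_on k U f = Ck_on k U g"
  using assms(2)
proof (induction k arbitrary: f g)
  case 0
  then show ?case by (auto intro!: continuous_on_cong)
next
  case (Suc k)
  have "Ck_on k U (pdy f) = Ck_on k U (pdy g)" "Ck_on k U (pdz f) = Ck_on k U (pdz g)"
    using Suc.prems by (auto intro!: Suc.IH pdy_pdz_cong[OF assms(1)])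
  moreover have "(case_prod f differentiable_on U) = (case_prod g differentiable_on U)"
    using differentiable_on_cong_open[OF assms(1)] Suc.prems by metis
  ultimately show ?case by simp
qed

lemma Ck_on_subset: "Ck_on k U f \<Longrightarrow> V \<subseteq> U \<Longrightarrow> Ck_on k V f"
  by (induction k arbitrary: f) (auto intro: continuous_on_subset differentiable_on_subset)

lemma Ck_on_Suc_imp: "Ck_on (Suc k) U f \<Longrightarrow> Ck_on k U f"
proof (induction k arbitrary: f)
  case 0
  then show ?case by (auto intro: differentiable_imp_continuous_on)
next
  case (Suc k)
  have "Ck_on (Suc (Suc k)) U f
      = (case_prod f differentiable_on U \<and> Ck_on (Suc k) U (pdy f) \<and> Ck_on (Suc k) U (pdz f))"
    and "Ck_on (Suc k) U f
      = (case_prod f differentiable_on U \<and> Ck_on k U (pdy f) \<and> Ck_on k U (pdz f))"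
    by (rule Ck_on.simps(2))+
  with Suc show ?case by blast
qed

lemma Ck_on_1_iff:
  "Ck_on 1 U f \<longleftrightarrow> case_prod f differentiable_on U
     \<and> continuous_on U (case_prod (pdy f)) \<and> continuous_on U (case_prod (pdz f))"
  by (simp add: One_nat_def)

lemma Ck_on_2_iff:
  "Ck_on 2 U f \<longleftrightarrow> case_prod f differentiable_on U \<and> Ck_on 1 U (pdy f) \<and> Ck_on 1 U (pdz f)"
  by (metis Ck_on.simps(2) Suc_1)

lemma Ck_on_1_differentiable_at:
  "Ck_on 1 U f \<Longrightarrow> open U \<Longrightarrow> (y, z) \<in> U \<Longrightarrow> case_prod f differentiable (at (y, z))"
  by (auto simp: Ck_on_1_iff differentiable_on_eq_differentiable_at)

lemma Ck_on_1_continuous_on: "Ck_on 1 U f \<Longrightarrow> continuous_on U (case_prod f)"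
  by (auto simp: Ck_on_1_iff intro: differentiable_imp_continuous_on)

lemma differentiable_comp2_partials:
  fixes H f1 f2 :: "real \<Rightarrow> real \<Rightarrow> real"
  assumes H: "case_prod H differentiable (at (f1 y z, f2 y z))"
    and f1: "case_prod f1 differentiable (at (y, z))"
    and f2: "case_prod f2 differentiable (at (y, z))"
  shows "(\<lambda>(y, z). H (f1 y z) (f2 y z)) differentiable (at (y, z))"
    and "pdy (\<lambda>y z. H (f1 y z) (f2 y z)) y z
           = pdy H (f1 y z) (f2 y z) * pdy f1 y z + pdz H (f1 y z) (f2 y z) * pdy f2 y z"
    and "pdz (\<lambda>y z. H (f1 y z) (f2 y z)) y z
           = pdy H (f1 y z) (f2 y z) * pdz f1 y z + pdz H (f1 y z) (f2 y z) * pdz f2 y z"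
proof -
  let ?Hy = "pdy H (f1 y z) (f2 y z)" and ?Hz = "pdz H (f1 y z) (f2 y z)"
  let ?L = "\<lambda>(h, k). ?Hy * (pdy f1 y z * h + pdz f1 y z * k) + ?Hz * (pdy f2 y z * h + pdz f2 y z * k)"
  have "(case_prod H \<circ> (\<lambda>x. (case_prod f1 x, case_prod f2 x)) has_derivative
          (\<lambda>(h, k). ?Hy * h + ?Hz * k) \<circ>
          (\<lambda>v. ((\<lambda>(h, k). pdy f1 y z * h + pdz f1 y z * k) v, (\<lambda>(h, k). pdy f2 y z * h + pdz f2 y z * k) v)))
        (at (y, z))"
    by (rule diff_chain_at)
       (use differentiable_has_partials(3)[OF f1] differentiable_has_partials(3)[OF f2]
          differentiable_has_partials(3)[OF H] in \<open>auto intro: has_derivative_Pair\<close>)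
  then have comp: "((\<lambda>(y, z). H (f1 y z) (f2 y z)) has_derivative ?L) (at (y, z))"
    by (simp add: o_def case_prod_beta')
  then show diff: "(\<lambda>(y, z). H (f1 y z) (f2 y z)) differentiable (at (y, z))"
    unfolding differentiable_def by blast
  have "(\<lambda>(h, k). pdy (\<lambda>y z. H (f1 y z) (f2 y z)) y z * h + pdz (\<lambda>y z. H (f1 y z) (f2 y z)) y z * k) = ?L"
    using differentiable_has_partials(3)[OF diff] comp by (rule has_derivative_unique)
  from fun_cong[OF this, of "(1, 0)"] fun_cong[OF this, of "(0, 1)"]
  show "pdy (\<lambda>y z. H (f1 y z) (f2 y z)) y z = ?Hy * pdy f1 y z + ?Hz * pdy f2 y z"
    and "pdz (\<lambda>y z. H (f1 y z) (f2 y z)) y z = ?Hy * pdz f1 y z + ?Hz * pdz f2 y z"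
    by simp_all
qed

lemma Ck_on_1_comp2:
  fixes H f1 f2 :: "real \<Rightarrow> real \<Rightarrow> real"
  assumes U: "open U" and W: "open W" and H: "Ck_on 1 W H"
    and f1: "Ck_on 1 U f1" and f2: "Ck_on 1 U f2"
    and img: "\<And>y z. (y, z) \<in> U \<Longrightarrow> (f1 y z, f2 y z) \<in> W"
  shows "Ck_on 1 U (\<lambda>y z. H (f1 y z) (f2 y z))"
proof -
  note partials = differentiable_comp2_partials[OF Ck_on_1_differentiable_at[OF H W img]
      Ck_on_1_differentiable_at[OF f1 U] Ck_on_1_differentiable_at[OF f2 U]]
  have "continuous_on U (\<lambda>x. case_prod k (case_prod f1 x, case_prod f2 x))"
    if "continuous_on W (case_prod k)" for k
    by (rule continuous_on_compose2[OF that])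
       (use Ck_on_1_continuous_on[OF f1] Ck_on_1_continuous_on[OF f2] img
         in \<open>auto intro!: continuous_intros\<close>)
  then have Hy: "continuous_on U (\<lambda>x. case_prod (pdy H) (case_prod f1 x, case_prod f2 x))"
    and Hz: "continuous_on U (\<lambda>x. case_prod (pdz H) (case_prod f1 x, case_prod f2 x))"
    using H by (auto simp: Ck_on_1_iff)
  have "continuous_on U (\<lambda>(y, z). pdy (\<lambda>y z. H (f1 y z) (f2 y z)) y z)"
    using continuous_on_add[OF continuous_on_mult[OF Hy] continuous_on_mult[OF Hz]] f1 f2
    by (auto simp: Ck_on_1_iff partials(2) case_prod_beta' cong: continuous_on_cong)
  moreover have "continuous_on U (\<lambda>(y, z). pdz (\<lambda>y z. H (f1 y z) (f2 y z)) y z)"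
    using continuous_on_add[OF continuous_on_mult[OF Hy] continuous_on_mult[OF Hz]] f1 f2
    by (auto simp: Ck_on_1_iff partials(3) case_prod_beta' cong: continuous_on_cong)
  moreover have "(\<lambda>(y, z). H (f1 y z) (f2 y z)) differentiable_on U"
    using partials(1) U by (auto simp: differentiable_on_eq_differentiable_at)
  ultimately show ?thesis by (simp add: Ck_on_1_iff)
qed

lemma pdy_pdz_arith:
  "pdy (\<lambda>a b. a + b) a b = 1" "pdz (\<lambda>a b. a + b) a b = 1"
  "pdy (\<lambda>a b. a - b) a b = 1" "pdz (\<lambda>a b. a - b) a b = -1"
  "pdy (\<lambda>a b. a * b) a b = b" "pdz (\<lambda>a b. a * b) a b = a"
  "pdy (\<lambda>a b. c) a b = 0" "pdz (\<lambda>a b. c) a b = 0"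
  "pdy (\<lambda>a b. a) a b = 1" "pdz (\<lambda>a b. a) a b = 0"
  "pdy (\<lambda>a b. b) a b = 0" "pdz (\<lambda>a b. b) a b = 1"
  by (auto intro!: pdy_eqI pdz_eqI derivative_eq_intros)

lemma pdy_pdz_divide:
  "b \<noteq> 0 \<Longrightarrow> pdy (\<lambda>a b. a / b) a b = 1 / b"
  "b \<noteq> 0 \<Longrightarrow> pdz (\<lambda>a b. a / b) a b = - a / b\<^sup>2"
  unfolding pdy_def pdz_def
  by (auto intro!: DERIV_imp_deriv derivative_eq_intros simp: power2_eq_square field_simps)

lemma pdy_pdz_sqrt:
  "a > 0 \<Longrightarrow> pdy (\<lambda>a b. sqrt a) a b = 1 / (2 * sqrt a)"
  "pdz (\<lambda>a b. sqrt a) a b = 0"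
proof -
  assume "a > 0"
  then have "(sqrt has_real_derivative inverse (sqrt a) / 2) (at a)"
    by (intro DERIV_real_sqrt)
  then show "pdy (\<lambda>a b. sqrt a) a b = 1 / (2 * sqrt a)"
    unfolding pdy_def by (simp add: DERIV_imp_deriv field_simps)
next
  show "pdz (\<lambda>a b. sqrt a) a b = 0" unfolding pdz_def by simp
qed

lemma differentiable_fst_snd: "fst differentiable F" "snd differentiable F"
  "fst differentiable_on S" "snd differentiable_on S"
  by (auto intro!: bounded_linear_imp_differentiable bounded_linear_imp_differentiable_on
      bounded_linear_fst bounded_linear_snd)

lemma Ck_on_1_arith:
  "Ck_on 1 U (\<lambda>a b. a + b)" "Ck_on 1 U (\<lambda>a b. a - b)" "Ck_on 1 U (\<lambda>a b. a * b)"
  "Ck_on 1 U (\<lambda>a b. c)" "Ck_on 1 U (\<lambda>a b. a)" "Ck_on 1 U (\<lambda>a b. b)"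
  unfolding Ck_on_1_iff pdy_pdz_arith
  by (auto simp: case_prod_beta' differentiable_fst_snd intro!: derivative_intros continuous_intros)

lemma Ck_on_1_divide_nonzero: "Ck_on 1 {(a, b). b \<noteq> 0} (\<lambda>a b. a / b :: real)"
proof -
  have "continuous_on {(a, b). b \<noteq> (0 :: real)} (\<lambda>(a, b). pdy (\<lambda>a b. a / b) a b)"
    by (rule continuous_on_cong[THEN iffD1, OF refl, of _ "\<lambda>x. 1 / snd x"])
      (auto simp: pdy_pdz_divide intro!: continuous_intros)
  moreover have "continuous_on {(a, b). b \<noteq> (0 :: real)} (\<lambda>(a, b). pdz (\<lambda>a b. a / b) a b)"
    by (rule continuous_on_cong[THEN iffD1, OF refl, of _ "\<lambda>x. - fst x / (snd x)\<^sup>2"])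
      (auto simp: pdy_pdz_divide intro!: continuous_intros)
  moreover have "(\<lambda>(a, b). a / b) differentiable_on {(a, b). b \<noteq> (0 :: real)}"
    unfolding differentiable_on_def
    by (auto simp: case_prod_beta' differentiable_fst_snd intro!: differentiable_divide)
  ultimately show ?thesis unfolding Ck_on_1_iff by simp
qed

lemma Ck_on_1_sqrt_pos: "Ck_on 1 {(a, b). a > 0} (\<lambda>a (b :: real). sqrt a)"
proof -
  have "continuous_on {(a :: real, b :: real). a > 0} (\<lambda>(a, b). pdy (\<lambda>a b. sqrt a) a b)"
    by (rule continuous_on_cong[THEN iffD1, OF refl, of _ "\<lambda>x. 1 / (2 * sqrt (fst x))"])
      (auto simp: pdy_pdz_sqrt intro!: continuous_intros)
  moreover have "continuous_on {(a :: real, b :: real). a > 0} (\<lambda>(a, b). pdz (\<lambda>a b. sqrt a) a b)"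
    by (simp add: pdy_pdz_sqrt)
  moreover have "(\<lambda>(a, b :: real). sqrt a) differentiable_on {(a :: real, b :: real). a > 0}"
    unfolding differentiable_on_def
  proof
    fix x :: "real \<times> real" assume "x \<in> {(a, b). a > 0}"
    then have "sqrt differentiable (at (fst x))"
      using DERIV_real_sqrt real_differentiable_def by (fastforce simp: case_prod_beta')
    then have "(\<lambda>x. sqrt (fst x)) differentiable (at x)"
      by (rule differentiable_compose) (simp add: differentiable_fst_snd)
    then show "(\<lambda>(a, b). sqrt a) differentiable (at x within {(a, b). a > 0})"
      by (simp add: case_prod_beta' differentiable_at_withinI)
  qed
  ultimately show ?thesis unfolding Ck_on_1_iff by simp
qed

lemma open_halfspaces: "open {(a, b :: real). b \<noteq> 0}" "open {(a :: real, b). a > 0}"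
proof -
  have "{(a, b :: real). b \<noteq> 0} = UNIV \<times> - {0}" "{(a :: real, b). a > 0} = {0<..} \<times> UNIV"
    by auto
  then show "open {(a, b :: real). b \<noteq> 0}" "open {(a :: real, b). a > 0}"
    by (metis open_Times open_UNIV open_Compl closed_singleton open_greaterThan)+
qed

context
  fixes U :: "(real \<times> real) set"
  assumes U: "open U"
begin

lemma Ck_on_1_add: "Ck_on 1 U f \<Longrightarrow> Ck_on 1 U g \<Longrightarrow> Ck_on 1 U (\<lambda>y z. f y z + g y z)"
  and Ck_on_1_diff: "Ck_on 1 U f \<Longrightarrow> Ck_on 1 U g \<Longrightarrow> Ck_on 1 U (\<lambda>y z. f y z - g y z)"
  and Ck_on_1_mult: "Ck_on 1 U f \<Longrightarrow> Ck_on 1 U g \<Longrightarrow> Ck_on 1 U (\<lambda>y z. f y z * g y z)"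
  using Ck_on_1_comp2[OF U open_UNIV] Ck_on_1_arith by auto

lemma Ck_on_1_divide:
  "Ck_on 1 U f \<Longrightarrow> Ck_on 1 U g \<Longrightarrow> (\<And>y z. (y, z) \<in> U \<Longrightarrow> g y z \<noteq> 0)
   \<Longrightarrow> Ck_on 1 U (\<lambda>y z. f y z / g y z)"
  using Ck_on_1_comp2[OF U open_halfspaces(1) Ck_on_1_divide_nonzero] by auto

lemma Ck_on_1_sqrt:
  "Ck_on 1 U f \<Longrightarrow> (\<And>y z. (y, z) \<in> U \<Longrightarrow> f y z > 0) \<Longrightarrow> Ck_on 1 U (\<lambda>y z. sqrt (f y z))"
  using Ck_on_1_comp2[OF U open_halfspaces(2) Ck_on_1_sqrt_pos, of f f] by auto

lemma Ck_on_1_const: "Ck_on 1 U (\<lambda>y z. c)"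
  by (rule Ck_on_1_arith)

lemma Ck_on_1_minus: "Ck_on 1 U f \<Longrightarrow> Ck_on 1 U (\<lambda>y z. - f y z)"
  using Ck_on_1_diff[OF Ck_on_1_const[of 0], of f] by simp

lemma Ck_on_1_power2: "Ck_on 1 U f \<Longrightarrow> Ck_on 1 U (\<lambda>y z. (f y z)\<^sup>2)"
  using Ck_on_1_mult[of f f] by (simp add: power2_eq_square)

end

lemmas Ck_on_1_intros = Ck_on_1_add Ck_on_1_diff Ck_on_1_mult Ck_on_1_divide Ck_on_1_sqrt
  Ck_on_1_const Ck_on_1_minus Ck_on_1_power2

lemma pdy_pdz_add:
  assumes "case_prod f differentiable (at (y, z))" "case_prod g differentiable (at (y, z))"
  shows "pdy (\<lambda>a b. f a b + g a b) y z = pdy f y z + pdy g y z"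
    and "pdz (\<lambda>a b. f a b + g a b) y z = pdz f y z + pdz g y z"
  using differentiable_comp2_partials(2,3)[of "\<lambda>a b. a + b", OF _ assms]
    Ck_on_1_differentiable_at[OF Ck_on_1_arith(1) open_UNIV]
  by (simp_all add: pdy_pdz_arith)

lemma pdy_pdz_diff:
  assumes "case_prod f differentiable (at (y, z))" "case_prod g differentiable (at (y, z))"
  shows "pdy (\<lambda>a b. f a b - g a b) y z = pdy f y z - pdy g y z"
    and "pdz (\<lambda>a b. f a b - g a b) y z = pdz f y z - pdz g y z"
  using differentiable_comp2_partials(2,3)[of "\<lambda>a b. a - b", OF _ assms]
    Ck_on_1_differentiable_at[OF Ck_on_1_arith(2) open_UNIV]
  by (simp_all add: pdy_pdz_arith)

section \<open>Symmetry of second derivatives and local inverses\<close>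

lemma double_difference_MVT:
  fixes f f1 f12 :: "real \<Rightarrow> real \<Rightarrow> real"
  assumes h: "h > 0" and k: "k > 0"
    and f1: "\<And>a b. a \<in> {x0..x0 + h} \<Longrightarrow> b \<in> {y0..y0 + k} \<Longrightarrow>
      ((\<lambda>t. f t b) has_real_derivative f1 a b) (at a)"
    and f12: "\<And>a b. a \<in> {x0..x0 + h} \<Longrightarrow> b \<in> {y0..y0 + k} \<Longrightarrow>
      ((\<lambda>t. f1 a t) has_real_derivative f12 a b) (at b)"
  obtains \<xi> \<eta> where "\<xi> \<in> {x0..x0 + h}" "\<eta> \<in> {y0..y0 + k}"
    "f (x0 + h) (y0 + k) - f (x0 + h) y0 - f x0 (y0 + k) + f x0 y0 = h * k * f12 \<xi> \<eta>"
proof -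
  have "\<exists>\<xi>. x0 < \<xi> \<and> \<xi> < x0 + h \<and>
      (\<lambda>t. f t (y0 + k) - f t y0) (x0 + h) - (\<lambda>t. f t (y0 + k) - f t y0) x0
        = (x0 + h - x0) * (f1 \<xi> (y0 + k) - f1 \<xi> y0)"
    by (rule MVT2) (use h k in \<open>auto intro!: DERIV_diff f1\<close>)
  then obtain \<xi> where \<xi>: "x0 < \<xi>" "\<xi> < x0 + h" and eq1:
    "(f (x0 + h) (y0 + k) - f (x0 + h) y0) - (f x0 (y0 + k) - f x0 y0)
       = h * (f1 \<xi> (y0 + k) - f1 \<xi> y0)"
    by auto
  have "\<exists>\<eta>. y0 < \<eta> \<and> \<eta> < y0 + k \<and> f1 \<xi> (y0 + k) - f1 \<xi> y0 = (y0 + k - y0) * f12 \<xi> \<eta>"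
    by (rule MVT2) (use k \<xi> in \<open>auto intro!: f12\<close>)
  then obtain \<eta> where \<eta>: "y0 < \<eta>" "\<eta> < y0 + k" and eq2: "f1 \<xi> (y0 + k) - f1 \<xi> y0 = k * f12 \<xi> \<eta>"
    by auto
  show thesis
    by (rule that[of \<xi> \<eta>]) (use \<xi> \<eta> eq1 eq2 in \<open>auto simp: algebra_simps\<close>)
qed

lemma dist_square_less:
  fixes x0 y0 d a b :: real
  assumes "d > 0" "a \<in> {x0..x0 + d/2}" "b \<in> {y0..y0 + d/2}"
  shows "dist (a, b) (x0, y0) < d"
proof -
  have "(dist a x0)\<^sup>2 + (dist b y0)\<^sup>2 \<le> (d/2)\<^sup>2 + (d/2)\<^sup>2"
    using assms by (intro add_mono power_mono) (auto simp: dist_real_def)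
  also have "\<dots> < d\<^sup>2" using assms(1) by (simp add: power2_eq_square)
  finally show ?thesis
    using assms(1) real_sqrt_less_iff[of _ "d\<^sup>2"] by (simp add: dist_Pair_Pair)
qed

text \<open>Both mixed partials are limits of the same double difference quotient.\<close>

lemma mixed_partials_eq:
  fixes f f1 f2 f12 f21 :: "real \<Rightarrow> real \<Rightarrow> real"
  assumes S: "open S" and p0: "(x0, y0) \<in> S"
    and f1: "\<And>a b. (a, b) \<in> S \<Longrightarrow> ((\<lambda>t. f t b) has_real_derivative f1 a b) (at a)"
    and f2: "\<And>a b. (a, b) \<in> S \<Longrightarrow> ((\<lambda>t. f a t) has_real_derivative f2 a b) (at b)"
    and f12: "\<And>a b. (a, b) \<in> S \<Longrightarrow> ((\<lambda>t. f1 a t) has_real_derivative f12 a b) (at b)"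
    and f21: "\<And>a b. (a, b) \<in> S \<Longrightarrow> ((\<lambda>t. f2 t b) has_real_derivative f21 a b) (at a)"
    and cont: "continuous_on S (case_prod f12)" "continuous_on S (case_prod f21)"
  shows "f12 x0 y0 = f21 x0 y0"
proof (rule ccontr)
  assume ne: "f12 x0 y0 \<noteq> f21 x0 y0"
  define e where "e = \<bar>f12 x0 y0 - f21 x0 y0\<bar> / 2"
  have "e > 0" using ne by (simp add: e_def)
  have "\<forall>\<^sub>F p in nhds (x0, y0). p \<in> S"
    using S p0 by (rule eventually_nhds_in_open)
  moreover have "\<forall>\<^sub>F p in nhds (x0, y0). dist (case_prod f12 p) (f12 x0 y0) < e"
    and "\<forall>\<^sub>F p in nhds (x0, y0). dist (case_prod f21 p) (f21 x0 y0) < e"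
    using cont S p0 \<open>e > 0\<close>
    by (auto simp: continuous_on_eq_continuous_at isCont_def tendsto_iff eventually_at_filter
        elim!: allE[of _ e] eventually_mono)
  ultimately obtain d where "d > 0" and d: "\<And>p. dist p (x0, y0) < d \<Longrightarrow>
      p \<in> S \<and> dist (case_prod f12 p) (f12 x0 y0) < e \<and> dist (case_prod f21 p) (f21 x0 y0) < e"
    unfolding eventually_nhds_metric by (metis (mono_tags, lifting) min_less_iff_conj zero_less_iff_neq_zero)
  define h where "h = d / 2"
  have "h > 0" using \<open>d > 0\<close> by (simp add: h_def)
  have square: "dist (a, b) (x0, y0) < d" if "a \<in> {x0..x0 + h}" "b \<in> {y0..y0 + h}" for a b
    using dist_square_less[OF \<open>d > 0\<close>] that by (simp add: h_def)
  define D where "D = f (x0 + h) (y0 + h) - f (x0 + h) y0 - f x0 (y0 + h) + f x0 y0"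
  obtain \<xi> \<eta> where \<xi>\<eta>: "\<xi> \<in> {x0..x0 + h}" "\<eta> \<in> {y0..y0 + h}" "D = h * h * f12 \<xi> \<eta>"
    using double_difference_MVT[of h h x0 y0 f f1 f12] \<open>h > 0\<close> square d f1 f12
    unfolding D_def by blast
  obtain \<eta>' \<xi>' where \<xi>'\<eta>': "\<eta>' \<in> {y0..y0 + h}" "\<xi>' \<in> {x0..x0 + h}" "D = h * h * f21 \<xi>' \<eta>'"
    using double_difference_MVT[of h h y0 x0 "\<lambda>b a. f a b" "\<lambda>b a. f2 a b" "\<lambda>b a. f21 a b"]
      \<open>h > 0\<close> square d f2 f21
    unfolding D_def by (smt (verit, best))
  have "f12 \<xi> \<eta> = f21 \<xi>' \<eta>'" using \<xi>\<eta> \<xi>'\<eta>' \<open>h > 0\<close> by simp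
  moreover have "dist (f12 \<xi> \<eta>) (f12 x0 y0) < e" "dist (f21 \<xi>' \<eta>') (f21 x0 y0) < e"
    using d square \<xi>\<eta> \<xi>'\<eta>' by force+
  ultimately show False by (auto simp: e_def dist_real_def abs_if split: if_splits)
qed

lemma pdz_pdy_eq_pdy_pdz:
  fixes f :: "real \<Rightarrow> real \<Rightarrow> real"
  assumes S: "open S" and p: "(y, z) \<in> S" and f: "case_prod f differentiable_on S"
    and fy: "Ck_on 1 S (pdy f)" and fz: "Ck_on 1 S (pdz f)"
  shows "pdz (pdy f) y z = pdy (pdz f) y z"
proof (rule mixed_partials_eq[OF S p])
  have "case_prod f differentiable at (a, b)" if "(a, b) \<in> S" for a b
    using f S that by (auto simp: differentiable_on_eq_differentiable_at)
  then show "((\<lambda>t. f t b) has_real_derivative pdy f a b) (at a)"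
    and "((\<lambda>t. f a t) has_real_derivative pdz f a b) (at b)" if "(a, b) \<in> S" for a b
    using differentiable_has_partials(1,2) that by blast+
  show "((\<lambda>t. pdy f a t) has_real_derivative pdz (pdy f) a b) (at b)"
    and "((\<lambda>t. pdz f t b) has_real_derivative pdy (pdz f) a b) (at a)" if "(a, b) \<in> S" for a b
    using differentiable_has_partials(1,2) Ck_on_1_differentiable_at[OF _ S that] fy fz by blast+
  show "continuous_on S (case_prod (pdz (pdy f)))" "continuous_on S (case_prod (pdy (pdz f)))"
    using fy fz by (simp_all add: Ck_on_1_iff)
qed

definition blinfun_mat2 :: "real \<Rightarrow> real \<Rightarrow> real \<Rightarrow> real \<Rightarrow> (real \<times> real) \<Rightarrow>\<^sub>L (real \<times> real)" where
  "blinfun_mat2 a b c d = Blinfun (\<lambda>(h, k). (a * h + b * k, c * h + d * k))"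

lemma blinfun_apply_mat2:
  "blinfun_apply (blinfun_mat2 a b c d) = (\<lambda>(h, k). (a * h + b * k, c * h + d * k))"
proof -
  have "linear (\<lambda>(h :: real, k :: real). (a * h + b * k, c * h + d * k))"
    by (rule linearI) (auto simp: algebra_simps)
  then show ?thesis
    unfolding blinfun_mat2_def by (simp add: bounded_linear_Blinfun_apply linear_conv_bounded_linear)
qed

lemma inverse_mat2_apply:
  fixes a b c d h k J :: real
  assumes J: "J = a * d - b * c" "J \<noteq> 0"
  shows "d / J * (a * h + b * k) + - b / J * (c * h + d * k) = h"
    and "- c / J * (a * h + b * k) + a / J * (c * h + d * k) = k"
proof -
  have "d / J * (a * h + b * k) + - b / J * (c * h + d * k)
      = (d * (a * h + b * k) - b * (c * h + d * k)) / J"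
    and "- c / J * (a * h + b * k) + a / J * (c * h + d * k)
      = (a * (c * h + d * k) - c * (a * h + b * k)) / J"
    by (simp_all add: diff_divide_distrib)
  moreover have "d * (a * h + b * k) - b * (c * h + d * k) = J * h"
    and "a * (c * h + d * k) - c * (a * h + b * k) = J * k"
    unfolding J(1) by (simp_all add: algebra_simps)
  ultimately show "d / J * (a * h + b * k) + - b / J * (c * h + d * k) = h"
    and "- c / J * (a * h + b * k) + a / J * (c * h + d * k) = k"
    using J(2) by simp_all
qed

lemma Ck_on_1_local_inverse:
  fixes r s :: "real \<Rightarrow> real \<Rightarrow> real"
  assumes U: "open U" and r: "Ck_on 1 U r" and s: "Ck_on 1 U s" and p0: "(y0, z0) \<in> U"
    and J0: "pdy r y0 z0 * pdz s y0 z0 - pdz r y0 z0 * pdy s y0 z0 \<noteq> 0"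
  obtains U' V g where "open U'" "U' \<subseteq> U" "(y0, z0) \<in> U'" "open V"
    "homeomorphism U' V (\<lambda>(y, z). (r y z, s y z)) g" "\<And>w. w \<in> V \<Longrightarrow> g differentiable (at w)"
proof -
  define f where "f = (\<lambda>(y, z). (r y z, s y z))"
  define f' where "f' = (\<lambda>(y, z). blinfun_mat2 (pdy r y z) (pdz r y z) (pdy s y z) (pdz s y z))"
  define J where "J = pdy r y0 z0 * pdz s y0 z0 - pdz r y0 z0 * pdy s y0 z0"
  have "(f has_derivative blinfun_apply (f' x)) (at x)" if "x \<in> U" for x
  proof -
    obtain a b where x: "x = (a, b)" by fastforce
    have "(case_prod r has_derivative (\<lambda>(h, k). pdy r a b * h + pdz r a b * k)) (at (a, b))"
      and "(case_prod s has_derivative (\<lambda>(h, k). pdy s a b * h + pdz s a b * k)) (at (a, b))"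
      using differentiable_has_partials(3) Ck_on_1_differentiable_at[OF _ U] r s that x by blast+
    from has_derivative_Pair[OF this]
    have "(f has_derivative (\<lambda>v. ((\<lambda>(h, k). pdy r a b * h + pdz r a b * k) v,
        (\<lambda>(h, k). pdy s a b * h + pdz s a b * k) v))) (at (a, b))"
      by (simp add: f_def case_prod_beta')
    then show ?thesis by (simp add: f'_def x blinfun_apply_mat2 case_prod_beta')
  qed
  moreover have "continuous_on U f'"
  proof (rule continuous_on_blinfun_componentwise)
    fix i :: "real \<times> real" assume "i \<in> Basis"
    then have "i = (1, 0) \<or> i = (0, 1)" by (auto simp: Basis_prod_def)
    then show "continuous_on U (\<lambda>x. blinfun_apply (f' x) i)"
      using r s by (auto simp: f'_def blinfun_apply_mat2 Ck_on_1_iff case_prod_beta'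
          intro!: continuous_intros)
  qed
  moreover have "blinfun_mat2 (pdz s y0 z0 / J) (- pdz r y0 z0 / J) (- pdy s y0 z0 / J) (pdy r y0 z0 / J)
      o\<^sub>L f' (y0, z0) = id_blinfun"
    using inverse_mat2_apply[OF J_def] J0
    by (intro blinfun_eqI) (auto simp: f'_def J_def blinfun_apply_mat2)
  ultimately obtain U' V g g' where "open U'" "U' \<subseteq> U" "(y0, z0) \<in> U'" "open V"
      "homeomorphism U' V f g" and "\<And>w. w \<in> V \<Longrightarrow> (g has_derivative g' w) (at w)"
    using inverse_function_theorem[OF U _ _ p0] by metis
  then show ?thesis
    using that unfolding f_def differentiable_def by blast
qed

lemma inverse_map_partials:
  fixes r s Y Z :: "real \<Rightarrow> real \<Rightarrow> real"
  assumes V: "open V" and w: "(a, b) \<in> V"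
    and Y: "case_prod Y differentiable (at (a, b))" and Z: "case_prod Z differentiable (at (a, b))"
    and r: "case_prod r differentiable (at (Y a b, Z a b))"
    and s: "case_prod s differentiable (at (Y a b, Z a b))"
    and inverse: "\<And>a b. (a, b) \<in> V \<Longrightarrow> r (Y a b) (Z a b) = a \<and> s (Y a b) (Z a b) = b"
  defines "J \<equiv> pdy r (Y a b) (Z a b) * pdz s (Y a b) (Z a b) - pdz r (Y a b) (Z a b) * pdy s (Y a b) (Z a b)"
  assumes J: "J \<noteq> 0"
  shows "pdy Y a b = pdz s (Y a b) (Z a b) / J" and "pdy Z a b = - pdy s (Y a b) (Z a b) / J"
    and "pdz Y a b = - pdz r (Y a b) (Z a b) / J" and "pdz Z a b = pdy r (Y a b) (Z a b) / J"
proof -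
  note r_comp = differentiable_comp2_partials(2,3)[OF r Y Z]
  note s_comp = differentiable_comp2_partials(2,3)[OF s Y Z]
  have "pdy (\<lambda>a b. r (Y a b) (Z a b)) a b = pdy (\<lambda>a b. a) a b"
    and "pdz (\<lambda>a b. r (Y a b) (Z a b)) a b = pdz (\<lambda>a b. a) a b"
    and "pdy (\<lambda>a b. s (Y a b) (Z a b)) a b = pdy (\<lambda>a b. b) a b"
    and "pdz (\<lambda>a b. s (Y a b) (Z a b)) a b = pdz (\<lambda>a b. b) a b"
    using inverse by (auto intro!: pdy_pdz_cong[OF V w])
  then have "pdy r (Y a b) (Z a b) * pdy Y a b + pdz r (Y a b) (Z a b) * pdy Z a b = 1"
    and "pdy s (Y a b) (Z a b) * pdy Y a b + pdz s (Y a b) (Z a b) * pdy Z a b = 0"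
    and "pdy r (Y a b) (Z a b) * pdz Y a b + pdz r (Y a b) (Z a b) * pdz Z a b = 0"
    and "pdy s (Y a b) (Z a b) * pdz Y a b + pdz s (Y a b) (Z a b) * pdz Z a b = 1"
    by (simp_all add: r_comp s_comp pdy_pdz_arith)
  then have "J * pdy Y a b = pdz s (Y a b) (Z a b)" and "J * pdy Z a b = - pdy s (Y a b) (Z a b)"
    and "J * pdz Y a b = - pdz r (Y a b) (Z a b)" and "J * pdz Z a b = pdy r (Y a b) (Z a b)"
    unfolding J_def by algebra+
  then show "pdy Y a b = pdz s (Y a b) (Z a b) / J" and "pdy Z a b = - pdy s (Y a b) (Z a b) / J"
    and "pdz Y a b = - pdz r (Y a b) (Z a b) / J" and "pdz Z a b = pdy r (Y a b) (Z a b) / J"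
    using J by (simp_all add: field_simps)
qed

lemma open_contains_ball_times_ball:
  fixes V :: "('a :: metric_space \<times> 'b :: metric_space) set"
  assumes "(a, b) \<in> V" "open V"
  obtains e1 e2 where "e1 > 0" "e2 > 0" "ball a e1 \<times> ball b e2 \<subseteq> V"
proof -
  obtain A B where AB: "open A" "open B" "(a, b) \<in> A \<times> B" "A \<times> B \<subseteq> V"
    by (rule open_prod_elim[OF assms(2,1)])
  have "\<exists>e>0. ball a e \<subseteq> A" "\<exists>e>0. ball b e \<subseteq> B"
    using AB(1-3) by (simp_all add: open_contains_ball)
  then obtain e1 e2 where e: "e1 > 0" "ball a e1 \<subseteq> A" "e2 > 0" "ball b e2 \<subseteq> B"
    by blast
  then have "ball a e1 \<times> ball b e2 \<subseteq> A \<times> B" by auto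
  with AB(4) have "ball a e1 \<times> ball b e2 \<subseteq> V" by (rule order_trans[rotated])
  with e(1,3) show thesis by (rule that)
qed

lemma DERIV_zero_convex_eq:
  assumes "convex S" "\<And>x. x \<in> S \<Longrightarrow> (f has_real_derivative 0) (at x)" "x \<in> S" "y \<in> S"
  shows "f x = f y"
proof -
  obtain c where "\<forall>x\<in>S. f x = c"
    using has_field_derivative_zero_constant[OF assms(1), of f] assms(2)
    by (blast intro: has_field_derivative_at_within)
  with assms(3,4) show ?thesis by simp
qed

lemma additive_separation:
  fixes f :: "real \<Rightarrow> real \<Rightarrow> real"
  assumes I: "convex I"
    and f': "\<And>a b. a \<in> I \<Longrightarrow> b \<in> J \<Longrightarrow> ((\<lambda>t. f t b) has_real_derivative f' a) (at a)"
    and "r0 \<in> I" "s0 \<in> J" "a \<in> I" "b \<in> J"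
  shows "f a b = f a s0 + f r0 b - f r0 s0"
proof -
  have "f a b - f a s0 = f r0 b - f r0 s0"
    by (rule DERIV_zero_convex_eq[OF I, where f = "\<lambda>t. f t b - f t s0"])
      (use assms in \<open>auto intro: DERIV_diff[THEN DERIV_cong] f'\<close>)
  then show ?thesis by simp
qed

lemma C2_on1I:
  assumes I: "open I"
    and F': "\<And>x. x \<in> I \<Longrightarrow> (F has_real_derivative F' x) (at x)"
    and F'': "\<And>x. x \<in> I \<Longrightarrow> (F' has_real_derivative F'' x) (at x)"
    and cont: "continuous_on I F''"
  shows "C2_on1 I F"
proof -
  have deriv_F: "(deriv F has_real_derivative F'' x) (at x)" if "x \<in> I" for x
    by (rule has_field_derivative_transform_within_open[OF F''[OF that] I that])
      (simp add: DERIV_imp_deriv[OF F'])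
  have "deriv (deriv F) x = F'' x" if "x \<in> I" for x
    using deriv_F[OF that] by (rule DERIV_imp_deriv)
  then have "continuous_on I (deriv (deriv F))"
    using cont by (simp cong: continuous_on_cong)
  with F' deriv_F I show ?thesis
    unfolding C2_on1_def by (auto simp: differentiable_on_eq_differentiable_at real_differentiable_def)
qed

section \<open>The Born-Infeld equation in Riemann invariants\<close>

lemma DERIV_slope_plus:
  assumes "(f has_real_derivative f') (at x)" "(g has_real_derivative g') (at x)"
    and "1 - f x * g x \<noteq> 0"
  shows "((\<lambda>t. (f t + g t) / (1 - f t * g t)) has_real_derivative
           ((1 + (g x)\<^sup>2) * f' + (1 + (f x)\<^sup>2) * g') / (1 - f x * g x)\<^sup>2) (at x)"
  using assms by (auto intro!: derivative_eq_intros simp: power2_eq_square algebra_simps)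

lemma DERIV_slope_minus:
  assumes "(f has_real_derivative f') (at x)" "(g has_real_derivative g') (at x)"
    and "1 - f x * g x \<noteq> 0"
  shows "((\<lambda>t. (g t - f t) / (1 - f t * g t)) has_real_derivative
           (((g x)\<^sup>2 - 1) * f' + (1 - (f x)\<^sup>2) * g') / (1 - f x * g x)\<^sup>2) (at x)"
  using assms by (auto intro!: derivative_eq_intros simp: power2_eq_square algebra_simps)

lemma BI_slope_identity:
  fixes r s ry rz sy sz :: real
  assumes "1 - r * s \<noteq> 0"
  shows "(1 - ((s - r) / (1 - r * s))\<^sup>2) * (((1 + s\<^sup>2) * ry + (1 + r\<^sup>2) * sy) / (1 - r * s)\<^sup>2)
     + 2 * ((r + s) / (1 - r * s)) * ((s - r) / (1 - r * s))
         * (((1 + s\<^sup>2) * rz + (1 + r\<^sup>2) * sz) / (1 - r * s)\<^sup>2)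
     - (1 + ((r + s) / (1 - r * s))\<^sup>2) * (((s\<^sup>2 - 1) * rz + (1 - r\<^sup>2) * sz) / (1 - r * s)\<^sup>2)
   = ((1 - r\<^sup>2) * (1 + s\<^sup>2) * ((1 + s\<^sup>2) * rz + (1 - s\<^sup>2) * ry)
      - (1 + r\<^sup>2) * (1 - s\<^sup>2) * ((1 + r\<^sup>2) * sz - (1 - r\<^sup>2) * sy)) / (1 - r * s) ^ 4"
proof -
  have frac: "(1 - (Q / D)\<^sup>2) * (Y / D\<^sup>2) + 2 * (P / D) * (Q / D) * (Z / D\<^sup>2) - (1 + (P / D)\<^sup>2) * (W / D\<^sup>2)
      = ((D\<^sup>2 - Q\<^sup>2) * Y + 2 * (P * Q) * Z - (D\<^sup>2 + P\<^sup>2) * W) / D ^ 4"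
    if "D \<noteq> 0" for D P Q Y Z W :: real
    using that by (simp add: field_simps power2_eq_square power4_eq_xxxx)
  have "((1 - r * s)\<^sup>2 - (s - r)\<^sup>2) * ((1 + s\<^sup>2) * ry + (1 + r\<^sup>2) * sy)
      + 2 * ((r + s) * (s - r)) * ((1 + s\<^sup>2) * rz + (1 + r\<^sup>2) * sz)
      - ((1 - r * s)\<^sup>2 + (r + s)\<^sup>2) * ((s\<^sup>2 - 1) * rz + (1 - r\<^sup>2) * sz)
    = (1 - r\<^sup>2) * (1 + s\<^sup>2) * ((1 + s\<^sup>2) * rz + (1 - s\<^sup>2) * ry)
      - (1 + r\<^sup>2) * (1 - s\<^sup>2) * ((1 + r\<^sup>2) * sz - (1 - r\<^sup>2) * sy)"
    by (simp add: algebra_simps power2_eq_square)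
  then show ?thesis by (simp only: frac[OF assms])
qed

definition transport_r :: "(real \<Rightarrow> real \<Rightarrow> real) \<Rightarrow> (real \<Rightarrow> real \<Rightarrow> real) \<Rightarrow> real \<Rightarrow> real \<Rightarrow> real"
  where "transport_r r s y z = (1 + (s y z)\<^sup>2) * pdz r y z + (1 - (s y z)\<^sup>2) * pdy r y z"

definition transport_s :: "(real \<Rightarrow> real \<Rightarrow> real) \<Rightarrow> (real \<Rightarrow> real \<Rightarrow> real) \<Rightarrow> real \<Rightarrow> real \<Rightarrow> real"
  where "transport_s r s y z = (1 + (r y z)\<^sup>2) * pdz s y z - (1 - (r y z)\<^sup>2) * pdy s y z"

lemma solve_slope_system:
  fixes r s a b P Q :: real
  assumes D: "1 - r * s \<noteq> 0" and k: "1 - r\<^sup>2 * s\<^sup>2 \<noteq> 0"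
    and P: "P = ((1 + s\<^sup>2) * a + (1 + r\<^sup>2) * b) / (1 - r * s)\<^sup>2"
    and Q: "Q = ((s\<^sup>2 - 1) * a + (1 - r\<^sup>2) * b) / (1 - r * s)\<^sup>2"
  shows "a = (1 - r * s)\<^sup>2 * ((1 - r\<^sup>2) * P - (1 + r\<^sup>2) * Q) / (2 * (1 - r\<^sup>2 * s\<^sup>2))"
    and "b = (1 - r * s)\<^sup>2 * ((1 + s\<^sup>2) * Q - (s\<^sup>2 - 1) * P) / (2 * (1 - r\<^sup>2 * s\<^sup>2))"
proof -
  have P': "(1 - r * s)\<^sup>2 * P = (1 + s\<^sup>2) * a + (1 + r\<^sup>2) * b"
    and Q': "(1 - r * s)\<^sup>2 * Q = (s\<^sup>2 - 1) * a + (1 - r\<^sup>2) * b"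
    using P Q D by simp_all
  have "(1 - r * s)\<^sup>2 * ((1 - r\<^sup>2) * P - (1 + r\<^sup>2) * Q) = a * (2 * (1 - r\<^sup>2 * s\<^sup>2))"
    and "(1 - r * s)\<^sup>2 * ((1 + s\<^sup>2) * Q - (s\<^sup>2 - 1) * P) = b * (2 * (1 - r\<^sup>2 * s\<^sup>2))"
    using P' Q' by algebra+
  then show "a = (1 - r * s)\<^sup>2 * ((1 - r\<^sup>2) * P - (1 + r\<^sup>2) * Q) / (2 * (1 - r\<^sup>2 * s\<^sup>2))"
    and "b = (1 - r * s)\<^sup>2 * ((1 + s\<^sup>2) * Q - (s\<^sup>2 - 1) * P) / (2 * (1 - r\<^sup>2 * s\<^sup>2))"
    using k by (simp_all add: field_simps)
qed

locale gradient_rs =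
  fixes psi r s :: "real \<Rightarrow> real \<Rightarrow> real" and U :: "(real \<times> real) set"
  assumes open_U: "open U" and r_C1: "Ck_on 1 U r" and s_C1: "Ck_on 1 U s"
    and denom_nonzero: "\<And>y z. (y, z) \<in> U \<Longrightarrow> 1 - r y z * s y z \<noteq> 0"
    and pdy_psi: "\<And>y z. (y, z) \<in> U \<Longrightarrow> pdy psi y z = (r y z + s y z) / (1 - r y z * s y z)"
    and pdz_psi: "\<And>y z. (y, z) \<in> U \<Longrightarrow> pdz psi y z = (s y z - r y z) / (1 - r y z * s y z)"
begin

lemma second_partials:
  assumes yz: "(y, z) \<in> U"
  shows "pdy (pdy psi) y z
      = ((1 + (s y z)\<^sup>2) * pdy r y z + (1 + (r y z)\<^sup>2) * pdy s y z) / (1 - r y z * s y z)\<^sup>2"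
    and "pdz (pdy psi) y z
      = ((1 + (s y z)\<^sup>2) * pdz r y z + (1 + (r y z)\<^sup>2) * pdz s y z) / (1 - r y z * s y z)\<^sup>2"
    and "pdy (pdz psi) y z
      = (((s y z)\<^sup>2 - 1) * pdy r y z + (1 - (r y z)\<^sup>2) * pdy s y z) / (1 - r y z * s y z)\<^sup>2"
    and "pdz (pdz psi) y z
      = (((s y z)\<^sup>2 - 1) * pdz r y z + (1 - (r y z)\<^sup>2) * pdz s y z) / (1 - r y z * s y z)\<^sup>2"
proof -
  note r = differentiable_has_partials(1,2)[OF Ck_on_1_differentiable_at[OF r_C1 open_U yz]]
  note s = differentiable_has_partials(1,2)[OF Ck_on_1_differentiable_at[OF s_C1 open_U yz]]
  note k = denom_nonzero[OF yz]
  have "pdy (pdy psi) y z = pdy (\<lambda>y z. (r y z + s y z) / (1 - r y z * s y z)) y z"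
    and "pdz (pdy psi) y z = pdz (\<lambda>y z. (r y z + s y z) / (1 - r y z * s y z)) y z"
    and "pdy (pdz psi) y z = pdy (\<lambda>y z. (s y z - r y z) / (1 - r y z * s y z)) y z"
    and "pdz (pdz psi) y z = pdz (\<lambda>y z. (s y z - r y z) / (1 - r y z * s y z)) y z"
    using pdy_psi pdz_psi by (auto intro!: pdy_pdz_cong[OF open_U yz])
  moreover note
    pdy_eqI[where f = "\<lambda>y z. (r y z + s y z) / (1 - r y z * s y z)",
      OF DERIV_slope_plus[where f = "\<lambda>t. r t z" and g = "\<lambda>t. s t z", OF r(1) s(1) k]]
    pdz_eqI[where f = "\<lambda>y z. (r y z + s y z) / (1 - r y z * s y z)",
      OF DERIV_slope_plus[where f = "\<lambda>t. r y t" and g = "\<lambda>t. s y t", OF r(2) s(2) k]]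
    pdy_eqI[where f = "\<lambda>y z. (s y z - r y z) / (1 - r y z * s y z)",
      OF DERIV_slope_minus[where f = "\<lambda>t. r t z" and g = "\<lambda>t. s t z", OF r(1) s(1) k]]
    pdz_eqI[where f = "\<lambda>y z. (s y z - r y z) / (1 - r y z * s y z)",
      OF DERIV_slope_minus[where f = "\<lambda>t. r y t" and g = "\<lambda>t. s y t", OF r(2) s(2) k]]
  ultimately show
    "pdy (pdy psi) y z
      = ((1 + (s y z)\<^sup>2) * pdy r y z + (1 + (r y z)\<^sup>2) * pdy s y z) / (1 - r y z * s y z)\<^sup>2"
    "pdz (pdy psi) y z
      = ((1 + (s y z)\<^sup>2) * pdz r y z + (1 + (r y z)\<^sup>2) * pdz s y z) / (1 - r y z * s y z)\<^sup>2"
    "pdy (pdz psi) y z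
      = (((s y z)\<^sup>2 - 1) * pdy r y z + (1 - (r y z)\<^sup>2) * pdy s y z) / (1 - r y z * s y z)\<^sup>2"
    "pdz (pdz psi) y z
      = (((s y z)\<^sup>2 - 1) * pdz r y z + (1 - (r y z)\<^sup>2) * pdz s y z) / (1 - r y z * s y z)\<^sup>2"
    by simp_all
qed

lemma Ck_on_1_gradient: "Ck_on 1 U (pdy psi)" "Ck_on 1 U (pdz psi)"
proof -
  have "Ck_on 1 U (pdy psi) = Ck_on 1 U (\<lambda>y z. (r y z + s y z) / (1 - r y z * s y z))"
    and "Ck_on 1 U (pdz psi) = Ck_on 1 U (\<lambda>y z. (s y z - r y z) / (1 - r y z * s y z))"
    by (rule Ck_on_cong[OF open_U]; simp add: pdy_psi pdz_psi)+
  moreover have "Ck_on 1 U (\<lambda>y z. (r y z + s y z) / (1 - r y z * s y z))"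
    and "Ck_on 1 U (\<lambda>y z. (s y z - r y z) / (1 - r y z * s y z))"
    using denom_nonzero by (intro Ck_on_1_intros open_U r_C1 s_C1; simp)+
  ultimately show "Ck_on 1 U (pdy psi)" "Ck_on 1 U (pdz psi)" by simp_all
qed

lemma BI_eq_iff_transport:
  assumes yz: "(y, z) \<in> U"
  shows "BI_eq psi y z \<longleftrightarrow> (1 - (r y z)\<^sup>2) * (1 + (s y z)\<^sup>2) * transport_r r s y z
    = (1 + (r y z)\<^sup>2) * (1 - (s y z)\<^sup>2) * transport_s r s y z"
  using denom_nonzero[OF yz]
  unfolding BI_eq_def pdy_psi[OF yz] pdz_psi[OF yz] second_partials[OF yz]
    BI_slope_identity[OF denom_nonzero[OF yz]] transport_r_def transport_s_def
  by simp

lemma mixed_partials_eq_iff_transport: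
  assumes yz: "(y, z) \<in> U"
  shows "pdz (pdy psi) y z = pdy (pdz psi) y z
    \<longleftrightarrow> transport_r r s y z + transport_s r s y z = 0"
proof -
  have "pdz (pdy psi) y z - pdy (pdz psi) y z
      = (transport_r r s y z + transport_s r s y z) / (1 - r y z * s y z)\<^sup>2"
    unfolding second_partials[OF yz] transport_r_def transport_s_def
    by (simp add: diff_divide_distrib[symmetric] algebra_simps)
  then show ?thesis
    using denom_nonzero[OF yz] by (simp add: eq_iff_diff_eq_0[of "pdz (pdy psi) y z"])
qed

lemma partials_rs:
  assumes yz: "(y, z) \<in> U" and k: "1 - (r y z)\<^sup>2 * (s y z)\<^sup>2 \<noteq> 0"
  defines "c \<equiv> (1 - r y z * s y z)\<^sup>2 / (2 * (1 - (r y z)\<^sup>2 * (s y z)\<^sup>2))"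
  shows "pdy r y z = c * ((1 - (r y z)\<^sup>2) * pdy (pdy psi) y z - (1 + (r y z)\<^sup>2) * pdy (pdz psi) y z)"
    and "pdy s y z = c * ((1 + (s y z)\<^sup>2) * pdy (pdz psi) y z - ((s y z)\<^sup>2 - 1) * pdy (pdy psi) y z)"
    and "pdz r y z = c * ((1 - (r y z)\<^sup>2) * pdz (pdy psi) y z - (1 + (r y z)\<^sup>2) * pdz (pdz psi) y z)"
    and "pdz s y z = c * ((1 + (s y z)\<^sup>2) * pdz (pdz psi) y z - ((s y z)\<^sup>2 - 1) * pdz (pdy psi) y z)"
  using solve_slope_system[OF denom_nonzero[OF yz] k second_partials(1,3)[OF yz]]
    solve_slope_system[OF denom_nonzero[OF yz] k second_partials(2,4)[OF yz]]
  by (simp_all add: c_def)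

lemma hessian_det:
  assumes yz: "(y, z) \<in> U"
  shows "pdy (pdy psi) y z * pdz (pdz psi) y z - pdz (pdy psi) y z * pdy (pdz psi) y z
    = 2 * (1 - (r y z)\<^sup>2 * (s y z)\<^sup>2) * (pdy r y z * pdz s y z - pdz r y z * pdy s y z)
      / (1 - r y z * s y z) ^ 4"
  unfolding second_partials[OF yz] by (simp add: field_simps) algebra

end

section \<open>Local representation of a Born-Infeld soliton\<close>

lemma slopes_as_rs:
  fixes p q :: real
  assumes pos: "1 + p\<^sup>2 - q\<^sup>2 > 0"
  defines "S \<equiv> sqrt (1 + p\<^sup>2 - q\<^sup>2)"
  defines "r \<equiv> (p - q) / (1 + S)" and "s \<equiv> (p + q) / (1 + S)"
  shows "1 - r * s > 0" and "1 + r * s > 0"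
    and "p = (r + s) / (1 - r * s)" and "q = (s - r) / (1 - r * s)"
proof -
  have S: "S > 0" and S2: "S * S = 1 + p\<^sup>2 - q\<^sup>2" unfolding S_def using pos by simp_all
  have rs: "r * s = (S - 1) / (S + 1)"
  proof -
    have "r * s = (p * p - q * q) / ((1 + S) * (1 + S))"
      unfolding r_def s_def by (simp add: algebra_simps)
    also have "p * p - q * q = (S - 1) * (S + 1)"
      using S2 by (simp add: algebra_simps power2_eq_square)
    finally show ?thesis using S by (simp add: add.commute)
  qed
  have minus: "1 - r * s = 2 / (1 + S)" and "1 + r * s = 2 * S / (1 + S)"
    unfolding rs using S by (simp_all add: field_simps)
  then show "1 - r * s > 0" and "1 + r * s > 0" using S by simp_all
  have "r + s = 2 * p / (1 + S)" "s - r = 2 * q / (1 + S)"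
    unfolding r_def s_def by (simp_all only: add_divide_distrib[symmetric] diff_divide_distrib[symmetric]) simp_all
  then show "p = (r + s) / (1 - r * s)" and "q = (s - r) / (1 - r * s)"
    unfolding minus using S by simp_all
qed

locale BI_soliton =
  fixes psi :: "real \<Rightarrow> real \<Rightarrow> real" and \<Omega> :: "(real \<times> real) set"
  assumes open_\<Omega>: "open \<Omega>" and smooth: "smooth_on2 \<Omega> psi"
    and BI: "\<And>y z. (y, z) \<in> \<Omega> \<Longrightarrow> BI_eq psi y z"
    and timelike: "\<And>y z. (y, z) \<in> \<Omega> \<Longrightarrow> (pdy psi y z)\<^sup>2 - (pdz psi y z)\<^sup>2 + 1 > 0"
begin

lemma psi_C3: "case_prod psi differentiable_on \<Omega>" "Ck_on 2 \<Omega> (pdy psi)" "Ck_on 2 \<Omega> (pdz psi)"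
proof -
  have "Ck_on (Suc 2) \<Omega> psi" using smooth unfolding smooth_on2_def by blast
  then show "case_prod psi differentiable_on \<Omega>" "Ck_on 2 \<Omega> (pdy psi)" "Ck_on 2 \<Omega> (pdz psi)"
    by (simp_all only: Ck_on.simps(2))
qed

lemma psi_second_partials_C1:
  "Ck_on 1 \<Omega> (pdy (pdy psi))" "Ck_on 1 \<Omega> (pdz (pdy psi))"
  "Ck_on 1 \<Omega> (pdy (pdz psi))" "Ck_on 1 \<Omega> (pdz (pdz psi))"
  using psi_C3 by (simp_all add: Ck_on_2_iff)

lemma psi_gradient_C1: "Ck_on 1 \<Omega> (pdy psi)" "Ck_on 1 \<Omega> (pdz psi)"
  using psi_C3(2,3) Ck_on_Suc_imp[of 1, unfolded Suc_1] by blast+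

definition root :: "real \<Rightarrow> real \<Rightarrow> real"
  where "root y z = sqrt (1 + (pdy psi y z)\<^sup>2 - (pdz psi y z)\<^sup>2)"

definition r :: "real \<Rightarrow> real \<Rightarrow> real"
  where "r y z = (pdy psi y z - pdz psi y z) / (1 + root y z)"

definition s :: "real \<Rightarrow> real \<Rightarrow> real"
  where "s y z = (pdy psi y z + pdz psi y z) / (1 + root y z)"

lemma rs_slopes:
  assumes "(y, z) \<in> \<Omega>"
  shows "1 - r y z * s y z > 0" and "1 + r y z * s y z > 0"
    and "pdy psi y z = (r y z + s y z) / (1 - r y z * s y z)"
    and "pdz psi y z = (s y z - r y z) / (1 - r y z * s y z)"
  using slopes_as_rs[of "pdy psi y z" "pdz psi y z"] timelike[OF assms]
  by (simp_all add: r_def s_def root_def)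

lemma rs_C1: "Ck_on 1 \<Omega> r" "Ck_on 1 \<Omega> s"
proof -
  have pos: "1 + (pdy psi y z)\<^sup>2 - (pdz psi y z)\<^sup>2 > 0" if "(y, z) \<in> \<Omega>" for y z
    using timelike[OF that] by linarith
  then have root_C1: "Ck_on 1 \<Omega> root"
    unfolding root_def[abs_def] by (intro Ck_on_1_intros open_\<Omega> psi_gradient_C1)
  have nonzero: "1 + root y z \<noteq> 0" if "(y, z) \<in> \<Omega>" for y z
    using real_sqrt_gt_zero[OF pos[OF that]] unfolding root_def by linarith
  show "Ck_on 1 \<Omega> r"
    unfolding r_def[abs_def] using nonzero
    by (intro Ck_on_1_intros open_\<Omega> psi_gradient_C1 root_C1) auto
  show "Ck_on 1 \<Omega> s"
    unfolding s_def[abs_def] using nonzero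
    by (intro Ck_on_1_intros open_\<Omega> psi_gradient_C1 root_C1) auto
qed

sublocale gradient_rs psi r s \<Omega>
proof
  fix y z assume yz: "(y, z) \<in> \<Omega>"
  show "1 - r y z * s y z \<noteq> 0" using rs_slopes(1)[OF yz] by simp
  show "pdy psi y z = (r y z + s y z) / (1 - r y z * s y z)" by (rule rs_slopes(3)[OF yz])
  show "pdz psi y z = (s y z - r y z) / (1 - r y z * s y z)" by (rule rs_slopes(4)[OF yz])
qed (rule open_\<Omega> rs_C1)+

lemma rs_product_bound: "(y, z) \<in> \<Omega> \<Longrightarrow> (r y z)\<^sup>2 * (s y z)\<^sup>2 < 1"
  using rs_slopes(1,2)[of y z] mult_pos_pos[of "1 - r y z * s y z" "1 + r y z * s y z"]
  by (simp add: power2_eq_square algebra_simps)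

text \<open>Symmetry of the Hessian adds the relation transport_r + transport_s = 0 to the
  Born-Infeld equation, and the two relations are independent because r^2 s^2 < 1.\<close>

lemma transport_eqs:
  assumes yz: "(y, z) \<in> \<Omega>"
  shows "transport_r r s y z = 0" and "transport_s r s y z = 0"
proof -
  have "pdz (pdy psi) y z = pdy (pdz psi) y z"
    using pdz_pdy_eq_pdy_pdz[OF open_\<Omega> yz psi_C3(1) psi_gradient_C1] .
  then have sum: "transport_r r s y z + transport_s r s y z = 0"
    using mixed_partials_eq_iff_transport[OF yz] by simp
  have "(1 - (r y z)\<^sup>2) * (1 + (s y z)\<^sup>2) * transport_r r s y z
      = (1 + (r y z)\<^sup>2) * (1 - (s y z)\<^sup>2) * transport_s r s y z"
    using BI[OF yz] BI_eq_iff_transport[OF yz] by simp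
  with sum have "2 * (1 - (r y z)\<^sup>2 * (s y z)\<^sup>2) * transport_r r s y z = 0"
    by algebra
  then show "transport_r r s y z = 0" using rs_product_bound[OF yz] by simp
  with sum show "transport_s r s y z = 0" by simp
qed

lemma partials_rs_C1:
  "Ck_on 1 \<Omega> (pdy r)" "Ck_on 1 \<Omega> (pdy s)" "Ck_on 1 \<Omega> (pdz r)" "Ck_on 1 \<Omega> (pdz s)"
proof -
  have k: "1 - (r y z)\<^sup>2 * (s y z)\<^sup>2 \<noteq> 0" if "(y, z) \<in> \<Omega>" for y z
    using rs_product_bound[OF that] by simp
  have coeff: "Ck_on 1 \<Omega> (\<lambda>y z. (1 - r y z * s y z)\<^sup>2 / (2 * (1 - (r y z)\<^sup>2 * (s y z)\<^sup>2)))"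
    using k by (intro Ck_on_1_intros open_\<Omega> rs_C1) auto
  have C1: "Ck_on 1 \<Omega> (\<lambda>y z. (1 - r y z * s y z)\<^sup>2 / (2 * (1 - (r y z)\<^sup>2 * (s y z)\<^sup>2))
      * (f y z * P y z - g y z * Q y z))"
    if "Ck_on 1 \<Omega> f" "Ck_on 1 \<Omega> g" "Ck_on 1 \<Omega> P" "Ck_on 1 \<Omega> Q" for f g P Q
    using that by (intro Ck_on_1_mult[OF open_\<Omega> coeff] Ck_on_1_intros open_\<Omega> rs_C1)
  note eqs = partials_rs[OF _ k]
  show "Ck_on 1 \<Omega> (pdy r)" "Ck_on 1 \<Omega> (pdy s)" "Ck_on 1 \<Omega> (pdz r)" "Ck_on 1 \<Omega> (pdz s)"
    by (simp_all only: Ck_on_cong[OF open_\<Omega> eqs(1)] Ck_on_cong[OF open_\<Omega> eqs(2)]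
        Ck_on_cong[OF open_\<Omega> eqs(3)] Ck_on_cong[OF open_\<Omega> eqs(4)])
      (intro C1 Ck_on_1_intros open_\<Omega> rs_C1 psi_second_partials_C1)+
qed

definition jac :: "real \<Rightarrow> real \<Rightarrow> real"
  where "jac y z = pdy r y z * pdz s y z - pdz r y z * pdy s y z"

lemma jac_C1: "Ck_on 1 \<Omega> jac"
  unfolding jac_def[abs_def] by (intro Ck_on_1_intros open_\<Omega> partials_rs_C1)

lemma jac_nonzero:
  assumes yz: "(y, z) \<in> \<Omega>" and K: "gauss_curv psi y z \<noteq> 0"
  shows "jac y z \<noteq> 0"
proof
  assume "jac y z = 0"
  then have "pdy (pdy psi) y z * pdz (pdz psi) y z - pdz (pdy psi) y z * pdy (pdz psi) y z = 0"
    using hessian_det[OF yz] by (simp add: jac_def)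
  moreover have "pdy (pdz psi) y z = pdz (pdy psi) y z"
    using pdz_pdy_eq_pdy_pdz[OF open_\<Omega> yz psi_C3(1) psi_gradient_C1] by simp
  ultimately show False using K by (simp add: gauss_curv_def power2_eq_square)
qed

end

lemma fraction_combination:
  fixes a b u v w c J :: real
  assumes D: "1 - a * b \<noteq> 0" and n: "(a + b) * u + (b - a) * v = c * (1 - a * b) * w"
  shows "(a + b) / (1 - a * b) * (u / J) + (b - a) / (1 - a * b) * (v / J) = c * (w / J)"
proof -
  have "(a + b) / (1 - a * b) * (u / J) + (b - a) / (1 - a * b) * (v / J)
      = ((a + b) * u) / ((1 - a * b) * J) + ((b - a) * v) / ((1 - a * b) * J)"
    by (simp only: times_divide_times_eq)
  also have "\<dots> = ((a + b) * u + (b - a) * v) / ((1 - a * b) * J)"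
    by (simp only: add_divide_distrib[symmetric])
  also have "\<dots> = (c * w) * (1 - a * b) / ((1 - a * b) * J)" unfolding n by (simp only: mult_ac)
  also have "\<dots> = c * (w / J)" using D by simp
  finally show ?thesis .
qed

locale BI_soliton_chart = BI_soliton +
  fixes N V :: "(real \<times> real) set" and g :: "real \<times> real \<Rightarrow> real \<times> real"
  assumes open_N: "open N" and N_sub: "N \<subseteq> \<Omega>" and jac_N: "\<And>y z. (y, z) \<in> N \<Longrightarrow> jac y z \<noteq> 0"
    and open_V: "open V"
    and homeo: "homeomorphism N V (\<lambda>(y, z). (r y z, s y z)) g"
    and g_diff: "\<And>w. w \<in> V \<Longrightarrow> g differentiable (at w)"
begin

definition Y :: "real \<Rightarrow> real \<Rightarrow> real" where "Y a b = fst (g (a, b))"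
definition Z :: "real \<Rightarrow> real \<Rightarrow> real" where "Z a b = snd (g (a, b))"

lemma YZ_in_N: "(a, b) \<in> V \<Longrightarrow> (Y a b, Z a b) \<in> N"
  using homeo unfolding homeomorphism_def Y_def Z_def by auto

lemma rs_YZ: "(a, b) \<in> V \<Longrightarrow> r (Y a b) (Z a b) = a \<and> s (Y a b) (Z a b) = b"
  using homeo unfolding homeomorphism_def Y_def Z_def by (auto simp: case_prod_beta)

lemma YZ_differentiable:
  assumes "(a, b) \<in> V"
  shows "case_prod Y differentiable (at (a, b))" and "case_prod Z differentiable (at (a, b))"
proof -
  have "case_prod Y = fst \<circ> g" "case_prod Z = snd \<circ> g" by (auto simp: Y_def Z_def fun_eq_iff)
  then show "case_prod Y differentiable (at (a, b))" "case_prod Z differentiable (at (a, b))"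
    using g_diff[OF assms] by (auto intro: differentiable_chain_at simp: differentiable_fst_snd)
qed

lemma N_C1: "Ck_on 1 N r" "Ck_on 1 N s" "Ck_on 1 N (pdy r)" "Ck_on 1 N (pdy s)"
  "Ck_on 1 N (pdz r)" "Ck_on 1 N (pdz s)" "Ck_on 1 N jac"
  using Ck_on_subset[OF _ N_sub] rs_C1 partials_rs_C1 jac_C1 by blast+

lemma Ck_on_1_over_jac: "Ck_on 1 N f \<Longrightarrow> Ck_on 1 N (\<lambda>y z. f y z / jac y z)"
  using jac_N by (intro Ck_on_1_intros open_N N_C1)

lemma YZ_partials:
  assumes w: "(a, b) \<in> V"
  shows "pdy Y a b = pdz s (Y a b) (Z a b) / jac (Y a b) (Z a b)"
    and "pdy Z a b = - pdy s (Y a b) (Z a b) / jac (Y a b) (Z a b)"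
    and "pdz Y a b = - pdz r (Y a b) (Z a b) / jac (Y a b) (Z a b)"
    and "pdz Z a b = pdy r (Y a b) (Z a b) / jac (Y a b) (Z a b)"
  using inverse_map_partials[OF open_V w YZ_differentiable[OF w]
      Ck_on_1_differentiable_at[OF N_C1(1) open_N YZ_in_N[OF w]]
      Ck_on_1_differentiable_at[OF N_C1(2) open_N YZ_in_N[OF w]] rs_YZ]
    jac_N[OF YZ_in_N[OF w]]
  by (simp_all add: jac_def)

lemma continuous_on_pullback:
  assumes "Ck_on 1 N k" "\<And>a b. (a, b) \<in> V \<Longrightarrow> h a b = k (Y a b) (Z a b)"
  shows "continuous_on V (case_prod h)"
proof -
  have "continuous_on V (\<lambda>w. case_prod k (g w))"
    using homeo Ck_on_1_continuous_on[OF assms(1)]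
    by (intro continuous_on_compose2[of N "case_prod k" V g]) (auto simp: homeomorphism_def)
  then show ?thesis
    using assms(2) by (auto simp: Y_def Z_def case_prod_beta cong: continuous_on_cong)
qed

lemma YZ_C1: "Ck_on 1 V Y" "Ck_on 1 V Z"
proof -
  have "continuous_on V (case_prod (pdy Y))" "continuous_on V (case_prod (pdz Y))"
    "continuous_on V (case_prod (pdy Z))" "continuous_on V (case_prod (pdz Z))"
    using continuous_on_pullback[OF Ck_on_1_over_jac[OF N_C1(6)] YZ_partials(1)]
      continuous_on_pullback[OF Ck_on_1_over_jac[OF Ck_on_1_minus[OF open_N N_C1(5)]] YZ_partials(3)]
      continuous_on_pullback[OF Ck_on_1_over_jac[OF Ck_on_1_minus[OF open_N N_C1(4)]] YZ_partials(2)]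
      continuous_on_pullback[OF Ck_on_1_over_jac[OF N_C1(3)] YZ_partials(4)]
    by simp_all
  moreover have "case_prod Y differentiable_on V" "case_prod Z differentiable_on V"
    using YZ_differentiable open_V by (auto simp: differentiable_on_eq_differentiable_at)
  ultimately show "Ck_on 1 V Y" "Ck_on 1 V Z" by (simp_all add: Ck_on_1_iff)
qed

lemma Ck_on_1_pullback: "Ck_on 1 N k \<Longrightarrow> Ck_on 1 V (\<lambda>a b. k (Y a b) (Z a b))"
  by (rule Ck_on_1_comp2[OF open_V open_N _ YZ_C1 YZ_in_N])

definition X :: "real \<Rightarrow> real \<Rightarrow> real" where "X a b = Y a b - Z a b"
definition W :: "real \<Rightarrow> real \<Rightarrow> real" where "W a b = Y a b + Z a b"
definition Psi :: "real \<Rightarrow> real \<Rightarrow> real" where "Psi a b = psi (Y a b) (Z a b)"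

lemma XW_partials:
  assumes w: "(a, b) \<in> V"
  shows "pdy X a b = (pdz s (Y a b) (Z a b) + pdy s (Y a b) (Z a b)) / jac (Y a b) (Z a b)"
    and "pdz X a b = (- pdz r (Y a b) (Z a b) - pdy r (Y a b) (Z a b)) / jac (Y a b) (Z a b)"
    and "pdy W a b = (pdz s (Y a b) (Z a b) - pdy s (Y a b) (Z a b)) / jac (Y a b) (Z a b)"
    and "pdz W a b = (pdy r (Y a b) (Z a b) - pdz r (Y a b) (Z a b)) / jac (Y a b) (Z a b)"
  using pdy_pdz_diff[OF YZ_differentiable[OF w]] pdy_pdz_add[OF YZ_differentiable[OF w]]
  unfolding X_def[abs_def] W_def[abs_def] YZ_partials[OF w]
  by (simp_all add: diff_divide_distrib add_divide_distrib)

lemma XW_C2: "Ck_on 2 V X" "Ck_on 2 V W"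
proof -
  have "Ck_on 1 V (pdy X)" "Ck_on 1 V (pdz X)" "Ck_on 1 V (pdy W)" "Ck_on 1 V (pdz W)"
    by (subst Ck_on_cong[OF open_V XW_partials(1)] Ck_on_cong[OF open_V XW_partials(2)]
        Ck_on_cong[OF open_V XW_partials(3)] Ck_on_cong[OF open_V XW_partials(4)], assumption,
        intro Ck_on_1_pullback Ck_on_1_over_jac Ck_on_1_intros open_N N_C1)+
  moreover have "case_prod X differentiable_on V" "case_prod W differentiable_on V"
    using YZ_differentiable open_V
    by (auto simp: differentiable_on_eq_differentiable_at X_def W_def case_prod_beta'
        intro: differentiable_diff[of "case_prod Y" _ "case_prod Z", simplified]
        differentiable_add[of "case_prod Y" _ "case_prod Z", simplified])
  ultimately show "Ck_on 2 V X" "Ck_on 2 V W" by (simp_all add: Ck_on_2_iff)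
qed

lemma transport_XW:
  assumes w: "(a, b) \<in> V"
  shows "pdz X a b = - b\<^sup>2 * pdz W a b" and "pdy W a b = - a\<^sup>2 * pdy X a b"
proof -
  have "transport_r r s (Y a b) (Z a b) = 0" "transport_s r s (Y a b) (Z a b) = 0"
    using transport_eqs YZ_in_N[OF w] N_sub by blast+
  then show "pdz X a b = - b\<^sup>2 * pdz W a b" "pdy W a b = - a\<^sup>2 * pdy X a b"
    using rs_YZ[OF w] unfolding XW_partials[OF w] transport_r_def transport_s_def
    by (auto simp: field_simps)
qed

lemma Psi_partials:
  assumes w: "(a, b) \<in> V"
  shows "pdy Psi a b = a * pdy X a b" and "pdz Psi a b = b * pdz W a b"
proof -
  let ?y = "Y a b" and ?z = "Z a b"
  have yz: "(?y, ?z) \<in> \<Omega>" using YZ_in_N[OF w] N_sub by blast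
  have ab: "r ?y ?z = a" "s ?y ?z = b" using rs_YZ[OF w] by auto
  have "transport_r r s ?y ?z = 0" "transport_s r s ?y ?z = 0" using transport_eqs[OF yz] by simp_all
  then have "(a + b) * pdz s ?y ?z + (b - a) * (- pdy s ?y ?z)
      = a * (1 - a * b) * (pdz s ?y ?z + pdy s ?y ?z)"
    and "(a + b) * (- pdz r ?y ?z) + (b - a) * pdy r ?y ?z
      = b * (1 - a * b) * (pdy r ?y ?z - pdz r ?y ?z)"
    unfolding transport_r_def transport_s_def ab by algebra+
  moreover have "pdy Psi a b = pdy psi ?y ?z * pdy Y a b + pdz psi ?y ?z * pdy Z a b"
    and "pdz Psi a b = pdy psi ?y ?z * pdz Y a b + pdz psi ?y ?z * pdz Z a b"
    using differentiable_comp2_partials(2,3)[OF _ YZ_differentiable[OF w]] psi_C3(1) open_\<Omega> yz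
    by (auto simp: Psi_def[abs_def] differentiable_on_eq_differentiable_at)
  moreover note slopes = rs_slopes(1,3,4)[OF yz, unfolded ab]
  ultimately show "pdy Psi a b = a * pdy X a b" and "pdz Psi a b = b * pdz W a b"
    unfolding XW_partials[OF w] YZ_partials[OF w] slopes(2,3)
    using fraction_combination slopes(1) by (simp_all only:)
qed

lemma mixed_XW_zero:
  assumes w: "(a, b) \<in> V"
  shows "pdz (pdy X) a b = 0" and "pdy (pdz W) a b = 0"
proof -
  have X: "case_prod X differentiable_on V" "Ck_on 1 V (pdy X)" "Ck_on 1 V (pdz X)"
    and W: "case_prod W differentiable_on V" "Ck_on 1 V (pdy W)" "Ck_on 1 V (pdz W)"
    using XW_C2 by (simp_all add: Ck_on_2_iff)
  have W_sym: "pdz (pdy W) a b = pdy (pdz W) a b"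
    using pdz_pdy_eq_pdy_pdz[OF open_V w W(1) W(2,3)] .
  have W_mixed: "pdz (pdy W) a b = - a\<^sup>2 * pdz (pdy X) a b"
  proof -
    have "pdz (pdy W) a b = pdz (\<lambda>a b. - a\<^sup>2 * pdy X a b) a b"
      using transport_XW by (auto intro!: pdy_pdz_cong[OF open_V w])
    also have "\<dots> = - a\<^sup>2 * pdz (pdy X) a b"
      by (rule pdz_eqI, rule DERIV_cmult,
          rule differentiable_has_partials(2)[OF Ck_on_1_differentiable_at[OF X(2) open_V w]])
    finally show ?thesis .
  qed
  have "pdz (pdy X) a b = pdy (pdz X) a b"
    using pdz_pdy_eq_pdy_pdz[OF open_V w X(1) X(2,3)] .
  also have "\<dots> = pdy (\<lambda>a b. - b\<^sup>2 * pdz W a b) a b"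
    using transport_XW by (auto intro!: pdy_pdz_cong[OF open_V w])
  also have "\<dots> = - b\<^sup>2 * pdy (pdz W) a b"
    by (rule pdy_eqI, rule DERIV_cmult,
        rule differentiable_has_partials(1)[OF Ck_on_1_differentiable_at[OF W(3) open_V w]])
  also have "\<dots> = a\<^sup>2 * b\<^sup>2 * pdz (pdy X) a b"
    unfolding W_sym[symmetric] W_mixed by simp
  finally have "(1 - a\<^sup>2 * b\<^sup>2) * pdz (pdy X) a b = 0"
    by (simp add: algebra_simps)
  moreover have "a\<^sup>2 * b\<^sup>2 < 1"
    using rs_product_bound[of "Y a b" "Z a b"] rs_YZ[OF w] YZ_in_N[OF w] N_sub by auto
  ultimately show "pdz (pdy X) a b = 0" and "pdy (pdz W) a b = 0"
    using W_sym W_mixed by simp_all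
qed

lemma XW_Psi_has_partials:
  assumes w: "(a, b) \<in> V"
  shows "((\<lambda>t. X t b) has_real_derivative pdy X a b) (at a)"
    and "((\<lambda>t. X a t) has_real_derivative pdz X a b) (at b)"
    and "((\<lambda>t. W t b) has_real_derivative pdy W a b) (at a)"
    and "((\<lambda>t. W a t) has_real_derivative pdz W a b) (at b)"
    and "((\<lambda>t. Psi t b) has_real_derivative pdy Psi a b) (at a)"
    and "((\<lambda>t. Psi a t) has_real_derivative pdz Psi a b) (at b)"
    and "((\<lambda>t. pdy X t b) has_real_derivative pdy (pdy X) a b) (at a)"
    and "((\<lambda>t. pdy X a t) has_real_derivative pdz (pdy X) a b) (at b)"
    and "((\<lambda>t. pdz W t b) has_real_derivative pdy (pdz W) a b) (at a)"
    and "((\<lambda>t. pdz W a t) has_real_derivative pdz (pdz W) a b) (at b)"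
proof -
  have yz: "(Y a b, Z a b) \<in> \<Omega>" using YZ_in_N[OF w] N_sub by blast
  have "case_prod psi differentiable (at (Y a b, Z a b))"
    using psi_C3(1) open_\<Omega> yz by (auto simp: differentiable_on_eq_differentiable_at)
  then have "case_prod Psi differentiable (at (a, b))"
    using differentiable_comp2_partials(1)[OF _ YZ_differentiable[OF w]] by (simp add: Psi_def[abs_def])
  moreover have "case_prod X differentiable (at (a, b))" "case_prod W differentiable (at (a, b))"
    "case_prod (pdy X) differentiable (at (a, b))" "case_prod (pdz W) differentiable (at (a, b))"
    using XW_C2 open_V w
    by (auto simp: Ck_on_2_iff differentiable_on_eq_differentiable_at Ck_on_1_differentiable_at)
  ultimately show
    "((\<lambda>t. X t b) has_real_derivative pdy X a b) (at a)"
    "((\<lambda>t. X a t) has_real_derivative pdz X a b) (at b)"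
    "((\<lambda>t. W t b) has_real_derivative pdy W a b) (at a)"
    "((\<lambda>t. W a t) has_real_derivative pdz W a b) (at b)"
    "((\<lambda>t. Psi t b) has_real_derivative pdy Psi a b) (at a)"
    "((\<lambda>t. Psi a t) has_real_derivative pdz Psi a b) (at b)"
    "((\<lambda>t. pdy X t b) has_real_derivative pdy (pdy X) a b) (at a)"
    "((\<lambda>t. pdy X a t) has_real_derivative pdz (pdy X) a b) (at b)"
    "((\<lambda>t. pdz W t b) has_real_derivative pdy (pdz W) a b) (at a)"
    "((\<lambda>t. pdz W a t) has_real_derivative pdz (pdz W) a b) (at b)"
    by (simp_all add: differentiable_has_partials)
qed

context
  fixes I J :: "real set" and r0 s0 :: real
  assumes I: "open I" "convex I" and J: "open J" "convex J" and IJ: "I \<times> J \<subseteq> V"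
    and r0: "r0 \<in> I" and s0: "s0 \<in> J"
begin

lemma box_in_V: "a \<in> I \<Longrightarrow> b \<in> J \<Longrightarrow> (a, b) \<in> V"
  using IJ by blast

lemma partials_separate:
  assumes "a \<in> I" "b \<in> J"
  shows "pdy X a b = pdy X a s0" and "pdz W a b = pdz W r0 b"
  using DERIV_zero_convex_eq[OF J(2), of "pdy X a"] DERIV_zero_convex_eq[OF I(2), of "\<lambda>t. pdz W t b"]
    XW_Psi_has_partials(8,9) mixed_XW_zero box_in_V assms r0 s0
  by (metis (no_types, lifting))+

lemma XW_Psi_separate:
  assumes a: "a \<in> I" and b: "b \<in> J"
  shows "X a b = X a s0 + X r0 b - X r0 s0"
    and "W a b = W a s0 + W r0 b - W r0 s0"
    and "Psi a b = Psi a s0 + Psi r0 b - Psi r0 s0"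
proof -
  show "X a b = X a s0 + X r0 b - X r0 s0"
    using additive_separation[OF I(2), where f = X and f' = "\<lambda>a. pdy X a s0", OF _ r0 s0 a b]
      XW_Psi_has_partials(1) partials_separate(1) box_in_V by metis
  show "Psi a b = Psi a s0 + Psi r0 b - Psi r0 s0"
    using additive_separation[OF I(2), where f = Psi and f' = "\<lambda>a. a * pdy X a s0", OF _ r0 s0 a b]
      XW_Psi_has_partials(5) Psi_partials(1) partials_separate(1) box_in_V by metis
  have "W a b = W r0 b + W a s0 - W r0 s0"
    using additive_separation[OF J(2), where f = "\<lambda>b a. W a b" and f' = "\<lambda>b. pdz W r0 b",
        OF _ s0 r0 b a]
      XW_Psi_has_partials(4) partials_separate(2) box_in_V by metis
  then show "W a b = W a s0 + W r0 b - W r0 s0" by simp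
qed

lemma sections_C2: "C2_on1 I (\<lambda>a. X a s0)" "C2_on1 J (\<lambda>b. W r0 b)"
proof -
  note partials = XW_Psi_has_partials[OF box_in_V]
  show "C2_on1 I (\<lambda>a. X a s0)"
  proof (rule C2_on1I[OF I(1)])
    show "((\<lambda>a. X a s0) has_real_derivative pdy X a s0) (at a)"
      and "((\<lambda>a. pdy X a s0) has_real_derivative pdy (pdy X) a s0) (at a)" if "a \<in> I" for a
      using partials(1,7)[OF that s0] .
    show "continuous_on I (\<lambda>a. pdy (pdy X) a s0)"
      using XW_C2(1) box_in_V s0
      by (intro continuous_on_compose2[of V "case_prod (pdy (pdy X))" I "\<lambda>a. (a, s0)", simplified])
        (auto simp: Ck_on_2_iff Ck_on_1_iff intro!: continuous_intros)
  qed
  show "C2_on1 J (\<lambda>b. W r0 b)"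
  proof (rule C2_on1I[OF J(1)])
    show "((\<lambda>b. W r0 b) has_real_derivative pdz W r0 b) (at b)"
      and "((\<lambda>b. pdz W r0 b) has_real_derivative pdz (pdz W) r0 b) (at b)" if "b \<in> J" for b
      using partials(4,10)[OF r0 that] .
    show "continuous_on J (\<lambda>b. pdz (pdz W) r0 b)"
      using XW_C2(2) box_in_V r0
      by (intro continuous_on_compose2[of V "case_prod (pdz (pdz W))" J "\<lambda>b. (r0, b)", simplified])
        (auto simp: Ck_on_2_iff Ck_on_1_iff intro!: continuous_intros)
  qed
qed

lemma BI_rep_on_box:
  "BI_rep psi {(y, z) \<in> N. r y z \<in> I \<and> s y z \<in> J} r s
     (\<lambda>a. X a s0) (\<lambda>b. W r0 b) (\<lambda>b. X r0 s0 - X r0 b) (\<lambda>a. W r0 s0 - W a s0)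
     (\<lambda>a. Psi a s0) (\<lambda>b. Psi r0 b - Psi r0 s0)"
proof -
  note partials = XW_Psi_has_partials[OF box_in_V]
  have deriv_F: "deriv (\<lambda>a. X a s0) a = pdy X a s0" if "a \<in> I" for a
    using partials(1)[OF that s0] by (rule DERIV_imp_deriv)
  have deriv_G: "deriv (\<lambda>b. W r0 b) b = pdz W r0 b" if "b \<in> J" for b
    using partials(4)[OF r0 that] by (rule DERIV_imp_deriv)
  have inverse: "Y (r y z) (s y z) = y \<and> Z (r y z) (s y z) = z" if "(y, z) \<in> N" for y z
    using homeo that unfolding homeomorphism_def Y_def Z_def by force
  show ?thesis
    unfolding BI_rep_def
  proof (intro exI conjI)
    show "\<forall>x\<in>J. ((\<lambda>b. X r0 s0 - X r0 b) has_real_derivative x\<^sup>2 * deriv (\<lambda>b. W r0 b) x) (at x)"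
      using partials(2)[OF r0] transport_XW(1) box_in_V r0 deriv_G
      by (auto intro!: derivative_eq_intros)
    show "\<forall>x\<in>I. ((\<lambda>a. W r0 s0 - W a s0) has_real_derivative x\<^sup>2 * deriv (\<lambda>a. X a s0) x) (at x)"
      using partials(3)[OF _ s0] transport_XW(2) box_in_V s0 deriv_F
      by (auto intro!: derivative_eq_intros)
    show "\<forall>x\<in>I. ((\<lambda>a. Psi a s0) has_real_derivative x * deriv (\<lambda>a. X a s0) x) (at x)"
      using partials(5)[OF _ s0] Psi_partials(1) box_in_V s0 deriv_F by auto
    show "\<forall>x\<in>J. ((\<lambda>b. Psi r0 b - Psi r0 s0) has_real_derivative x * deriv (\<lambda>b. W r0 b) x) (at x)"
      using partials(6)[OF r0] Psi_partials(2) box_in_V r0 deriv_G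
      by (auto intro!: derivative_eq_intros)
    show "\<forall>(y, z)\<in>{(y, z) \<in> N. r y z \<in> I \<and> s y z \<in> J}.
        y - z = X (r y z) s0 - (X r0 s0 - X r0 (s y z))
      \<and> y + z = W r0 (s y z) - (W r0 s0 - W (r y z) s0)
      \<and> psi y z = Psi (r y z) s0 + (Psi r0 (s y z) - Psi r0 s0)"
    proof clarify
      fix y z assume yz: "(y, z) \<in> N" and a: "r y z \<in> I" and b: "s y z \<in> J"
      have "X (r y z) (s y z) = y - z" "W (r y z) (s y z) = y + z" "Psi (r y z) (s y z) = psi y z"
        using inverse[OF yz] by (simp_all add: X_def W_def Psi_def)
      then show "y - z = X (r y z) s0 - (X r0 s0 - X r0 (s y z))
        \<and> y + z = W r0 (s y z) - (W r0 s0 - W (r y z) s0)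
        \<and> psi y z = Psi (r y z) s0 + (Psi r0 (s y z) - Psi r0 s0)"
        using XW_Psi_separate[OF a b] by simp
    qed
  qed (use I J sections_C2 in auto)
qed

end

lemma param_chart_subset: "U \<subseteq> N \<Longrightarrow> param_chart U r s"
  unfolding param_chart_def
proof (intro conjI)
  assume U: "U \<subseteq> N"
  show "Ck_on 1 U r" "Ck_on 1 U s"
    using Ck_on_subset[OF N_C1(1) U] Ck_on_subset[OF N_C1(2) U] .
  have "g ((\<lambda>(y, z). (r y z, s y z)) x) = x" if "x \<in> N" for x
    using homeo that by (simp add: homeomorphism_def)
  then have "inj_on (\<lambda>(y, z). (r y z, s y z)) N"
    by (rule inj_on_inverseI)
  then show "inj_on (\<lambda>(y, z). (r y z, s y z)) U"
    using U by (rule inj_on_subset)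
  show "\<forall>(y, z)\<in>U. pdy r y z * pdz s y z - pdz r y z * pdy s y z \<noteq> 0"
    using jac_N U by (auto simp: jac_def)
qed

lemma local_representation:
  assumes p0: "(y0, z0) \<in> N"
  shows "\<exists>U r s F G A B C D. open U \<and> (y0, z0) \<in> U \<and> U \<subseteq> \<Omega>
            \<and> param_chart U r s \<and> BI_rep psi U r s F G A B C D"
proof -
  define f where "f = (\<lambda>(y, z). (r y z, s y z))"
  have f: "continuous_on N f" "f ` N = V"
    using homeo unfolding homeomorphism_def f_def by simp_all
  have "(r y0 z0, s y0 z0) \<in> V"
    using imageI[OF p0, of f] f(2) by (simp add: f_def)
  then obtain e1 e2 where "e1 > 0" "e2 > 0" "ball (r y0 z0) e1 \<times> ball (s y0 z0) e2 \<subseteq> V"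
    using open_V by (rule open_contains_ball_times_ball)
  define I where "I = ball (r y0 z0) e1"
  define J where "J = ball (s y0 z0) e2"
  have box: "I \<times> J \<subseteq> V" "r y0 z0 \<in> I" "s y0 z0 \<in> J"
    using \<open>e1 > 0\<close> \<open>e2 > 0\<close> \<open>ball (r y0 z0) e1 \<times> ball (s y0 z0) e2 \<subseteq> V\<close>
    unfolding I_def J_def by auto
  define U where "U = {(y, z) \<in> N. r y z \<in> I \<and> s y z \<in> J}"
  have "open (f -` (I \<times> J) \<inter> N)"
    using f(1) open_N by (simp add: continuous_on_open_vimage I_def J_def open_Times)
  moreover have "f -` (I \<times> J) \<inter> N = U" by (auto simp: U_def f_def)
  ultimately have "open U" by simp
  moreover have "param_chart U r s" by (rule param_chart_subset) (auto simp: U_def)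
  moreover have "BI_rep psi U r s
     (\<lambda>a. X a (s y0 z0)) (\<lambda>b. W (r y0 z0) b) (\<lambda>b. X (r y0 z0) (s y0 z0) - X (r y0 z0) b)
     (\<lambda>a. W (r y0 z0) (s y0 z0) - W a (s y0 z0))
     (\<lambda>a. Psi a (s y0 z0)) (\<lambda>b. Psi (r y0 z0) b - Psi (r y0 z0) (s y0 z0))"
    unfolding U_def by (rule BI_rep_on_box[OF _ _ _ _ box]) (simp_all add: I_def J_def)
  moreover have "(y0, z0) \<in> U" "U \<subseteq> \<Omega>" using p0 box N_sub by (auto simp: U_def)
  ultimately show ?thesis by blast
qed

end

lemma BI_soliton_local_representation:
  fixes psi :: "real \<Rightarrow> real \<Rightarrow> real"
  assumes "open \<Omega>" and "smooth_on2 \<Omega> psi" and "\<forall>(y, z)\<in>\<Omega>. BI_eq psi y z"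
    and "\<forall>(y, z)\<in>\<Omega>. (pdy psi y z)\<^sup>2 - (pdz psi y z)\<^sup>2 + 1 > 0"
    and p0: "(y0, z0) \<in> \<Omega>" and K: "gauss_curv psi y0 z0 \<noteq> 0"
  shows "\<exists>U r s F G A B C D. open U \<and> (y0, z0) \<in> U \<and> U \<subseteq> \<Omega>
            \<and> param_chart U r s \<and> BI_rep psi U r s F G A B C D"
proof -
  interpret BI_soliton psi \<Omega>
    using assms(1-4) by unfold_locales auto
  define N where "N = {x \<in> \<Omega>. case_prod jac x \<noteq> 0}"
  have "open (case_prod jac -` (- {0}) \<inter> \<Omega>)"
    using Ck_on_1_continuous_on[OF jac_C1] open_\<Omega> by (simp add: continuous_on_open_vimage open_Compl)
  moreover have "case_prod jac -` (- {0}) \<inter> \<Omega> = N" by (auto simp: N_def)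
  ultimately have "open N" by simp
  moreover have "Ck_on 1 N r" "Ck_on 1 N s"
    by (rule Ck_on_subset[OF rs_C1(1)] Ck_on_subset[OF rs_C1(2)]; auto simp: N_def)+
  moreover have "(y0, z0) \<in> N" using jac_nonzero[OF p0 K] p0 by (simp add: N_def)
  moreover have "pdy r y0 z0 * pdz s y0 z0 - pdz r y0 z0 * pdy s y0 z0 \<noteq> 0"
    using jac_nonzero[OF p0 K] by (simp add: jac_def)
  ultimately obtain N' V g where N': "open N'" "N' \<subseteq> N" "(y0, z0) \<in> N'" and V: "open V"
      and homeo: "homeomorphism N' V (\<lambda>(y, z). (r y z, s y z)) g"
      and g: "\<And>w. w \<in> V \<Longrightarrow> g differentiable (at w)"
    by (rule Ck_on_1_local_inverse) blast
  interpret BI_soliton_chart psi \<Omega> N' V g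
  proof unfold_locales
    show "N' \<subseteq> \<Omega>" using N'(2) by (auto simp: N_def)
    show "jac y z \<noteq> 0" if "(y, z) \<in> N'" for y z using that N'(2) by (auto simp: N_def)
  qed (fact N' V homeo g)+
  show ?thesis using local_representation[OF N'(3)] .
qed

section \<open>The representation defines a Born-Infeld soliton\<close>

lemma representation_system_solution:
  fixes a b c d r s :: real
  assumes e1: "a - s\<^sup>2 * b = 1" and e2: "b - r\<^sup>2 * a = 1"
    and e3: "c - s\<^sup>2 * d = -1" and e4: "d - r\<^sup>2 * c = 1"
  shows "1 - r * s \<noteq> 0" and "a \<noteq> 0" and "b \<noteq> 0"
    and "r * a + s * b = (r + s) / (1 - r * s)"
    and "r * c + s * d = (s - r) / (1 - r * s)"
    and "(1 + s\<^sup>2) * c + (1 - s\<^sup>2) * a = 0"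
    and "(1 + r\<^sup>2) * d - (1 - r\<^sup>2) * b = 0"
proof -
  have ha: "a * (1 - r\<^sup>2 * s\<^sup>2) = 1 + s\<^sup>2" and hb: "b * (1 - r\<^sup>2 * s\<^sup>2) = 1 + r\<^sup>2"
    using e1 e2 by algebra+
  have hc: "c * (1 - r\<^sup>2 * s\<^sup>2) = s\<^sup>2 - 1" and hd: "d * (1 - r\<^sup>2 * s\<^sup>2) = 1 - r\<^sup>2"
    using e3 e4 by algebra+
  have pos: "1 + s\<^sup>2 > 0" "1 + r\<^sup>2 > 0" by (simp_all add: add_pos_nonneg)
  then have k: "1 - r\<^sup>2 * s\<^sup>2 \<noteq> 0" using ha by auto
  have factor: "1 - r\<^sup>2 * s\<^sup>2 = (1 - r * s) * (1 + r * s)" by (simp add: algebra_simps power2_eq_square)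
  show "1 - r * s \<noteq> 0" using k factor by auto
  show "a \<noteq> 0" "b \<noteq> 0" using ha hb pos by auto
  have "((r * a + s * b) * (1 - r * s) - (r + s)) * (1 + r * s) = 0"
    using ha hb by algebra
  moreover have "((r * c + s * d) * (1 - r * s) - (s - r)) * (1 + r * s) = 0"
    using hc hd by algebra
  moreover have "1 + r * s \<noteq> 0" using k factor by auto
  ultimately have "(r * a + s * b) * (1 - r * s) = r + s" and "(r * c + s * d) * (1 - r * s) = s - r"
    by simp_all
  then show "r * a + s * b = (r + s) / (1 - r * s)" and "r * c + s * d = (s - r) / (1 - r * s)"
    using \<open>1 - r * s \<noteq> 0\<close> by (simp_all add: eq_divide_eq)
  have "((1 + s\<^sup>2) * c + (1 - s\<^sup>2) * a) * (1 - r\<^sup>2 * s\<^sup>2) = 0" using ha hc by algebra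
  moreover have "((1 + r\<^sup>2) * d - (1 - r\<^sup>2) * b) * (1 - r\<^sup>2 * s\<^sup>2) = 0" using hb hd by algebra
  ultimately show "(1 + s\<^sup>2) * c + (1 - s\<^sup>2) * a = 0" and "(1 + r\<^sup>2) * d - (1 - r\<^sup>2) * b = 0"
    using k by simp_all
qed

locale BI_representation =
  fixes psi r s :: "real \<Rightarrow> real \<Rightarrow> real" and U :: "(real \<times> real) set"
    and F G A B C D :: "real \<Rightarrow> real" and I J :: "real set"
  assumes open_U: "open U" and r_C1: "Ck_on 1 U r" and s_C1: "Ck_on 1 U s"
    and open_I: "open I" and open_J: "open J"
    and rs_IJ: "\<And>y z. (y, z) \<in> U \<Longrightarrow> r y z \<in> I \<and> s y z \<in> J"
    and F: "C2_on1 I F" and G: "C2_on1 J G"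
    and A: "\<And>x. x \<in> J \<Longrightarrow> (A has_real_derivative x\<^sup>2 * deriv G x) (at x)"
    and B: "\<And>x. x \<in> I \<Longrightarrow> (B has_real_derivative x\<^sup>2 * deriv F x) (at x)"
    and C: "\<And>x. x \<in> I \<Longrightarrow> (C has_real_derivative x * deriv F x) (at x)"
    and D: "\<And>x. x \<in> J \<Longrightarrow> (D has_real_derivative x * deriv G x) (at x)"
    and rep: "\<And>y z. (y, z) \<in> U \<Longrightarrow> y - z = F (r y z) - A (s y z) \<and> y + z = G (s y z) - B (r y z)
                 \<and> psi y z = C (r y z) + D (s y z)"
begin

lemma FG_derivatives:
  "x \<in> I \<Longrightarrow> (F has_real_derivative deriv F x) (at x)"
  "x \<in> J \<Longrightarrow> (G has_real_derivative deriv G x) (at x)"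
  using F G open_I open_J
  by (auto simp: C2_on1_def differentiable_on_eq_differentiable_at DERIV_deriv_iff_real_differentiable)

lemma comp_partials:
  assumes yz: "(y, z) \<in> U" and H: "(H has_real_derivative H') (at (r y z))"
    and K: "(K has_real_derivative K') (at (s y z))"
  shows "pdy (\<lambda>a b. H (r a b) + K (s a b)) y z = H' * pdy r y z + K' * pdy s y z"
    and "pdz (\<lambda>a b. H (r a b) + K (s a b)) y z = H' * pdz r y z + K' * pdz s y z"
proof -
  note r = differentiable_has_partials(1,2)[OF Ck_on_1_differentiable_at[OF r_C1 open_U yz]]
  note s = differentiable_has_partials(1,2)[OF Ck_on_1_differentiable_at[OF s_C1 open_U yz]]
  show "pdy (\<lambda>a b. H (r a b) + K (s a b)) y z = H' * pdy r y z + K' * pdy s y z"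
    by (rule pdy_eqI, rule DERIV_add[OF DERIV_chain2[OF _ r(1), OF H] DERIV_chain2[OF _ s(1), OF K]])
  show "pdz (\<lambda>a b. H (r a b) + K (s a b)) y z = H' * pdz r y z + K' * pdz s y z"
    by (rule pdz_eqI, rule DERIV_add[OF DERIV_chain2[OF _ r(2), OF H] DERIV_chain2[OF _ s(2), OF K]])
qed

lemma linear_system:
  assumes yz: "(y, z) \<in> U"
  defines "Fr \<equiv> deriv F (r y z)" and "Gs \<equiv> deriv G (s y z)"
  shows "Fr * pdy r y z - (s y z)\<^sup>2 * (Gs * pdy s y z) = 1"
    and "Gs * pdy s y z - (r y z)\<^sup>2 * (Fr * pdy r y z) = 1"
    and "Fr * pdz r y z - (s y z)\<^sup>2 * (Gs * pdz s y z) = -1"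
    and "Gs * pdz s y z - (r y z)\<^sup>2 * (Fr * pdz r y z) = 1"
proof -
  have r: "r y z \<in> I" and s: "s y z \<in> J" using rs_IJ[OF yz] by auto
  note FA = comp_partials[OF yz FG_derivatives(1)[OF r] DERIV_cmult[OF A[OF s], of "-1"]]
  note BG = comp_partials[OF yz DERIV_cmult[OF B[OF r], of "-1"] FG_derivatives(2)[OF s]]
  have "pdy (\<lambda>a b. a - b) y z = pdy (\<lambda>a b. F (r a b) + - 1 * A (s a b)) y z"
    and "pdz (\<lambda>a b. a - b) y z = pdz (\<lambda>a b. F (r a b) + - 1 * A (s a b)) y z"
    and "pdy (\<lambda>a b. a + b) y z = pdy (\<lambda>a b. - 1 * B (r a b) + G (s a b)) y z"
    and "pdz (\<lambda>a b. a + b) y z = pdz (\<lambda>a b. - 1 * B (r a b) + G (s a b)) y z"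
    using rep by (auto intro!: pdy_pdz_cong[OF open_U yz])
  then show "Fr * pdy r y z - (s y z)\<^sup>2 * (Gs * pdy s y z) = 1"
    and "Gs * pdy s y z - (r y z)\<^sup>2 * (Fr * pdy r y z) = 1"
    and "Fr * pdz r y z - (s y z)\<^sup>2 * (Gs * pdz s y z) = -1"
    and "Gs * pdz s y z - (r y z)\<^sup>2 * (Fr * pdz r y z) = 1"
    unfolding FA BG pdy_pdz_arith Fr_def Gs_def by (simp_all add: algebra_simps)
qed

lemma slopes_and_transport:
  assumes yz: "(y, z) \<in> U"
  shows "1 - r y z * s y z \<noteq> 0"
    and "pdy psi y z = (r y z + s y z) / (1 - r y z * s y z)"
    and "pdz psi y z = (s y z - r y z) / (1 - r y z * s y z)"
    and "transport_r r s y z = 0" and "transport_s r s y z = 0"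
proof -
  have r: "r y z \<in> I" and s: "s y z \<in> J" using rs_IJ[OF yz] by auto
  note sol = representation_system_solution[OF linear_system[OF yz]]
  note CD = comp_partials[OF yz C[OF r] D[OF s]]
  have "pdy psi y z = pdy (\<lambda>a b. C (r a b) + D (s a b)) y z"
    and "pdz psi y z = pdz (\<lambda>a b. C (r a b) + D (s a b)) y z"
    using rep by (auto intro!: pdy_pdz_cong[OF open_U yz])
  then show "pdy psi y z = (r y z + s y z) / (1 - r y z * s y z)"
    and "pdz psi y z = (s y z - r y z) / (1 - r y z * s y z)"
    using sol(4,5) unfolding CD by (simp_all add: algebra_simps)
  show "1 - r y z * s y z \<noteq> 0" by (rule sol(1))
  have "deriv F (r y z) \<noteq> 0" "deriv G (s y z) \<noteq> 0" using sol(2,3) by auto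
  moreover have "deriv F (r y z) * transport_r r s y z = 0"
    and "deriv G (s y z) * transport_s r s y z = 0"
    using sol(6,7) unfolding transport_r_def transport_s_def by algebra+
  ultimately show "transport_r r s y z = 0" "transport_s r s y z = 0" by simp_all
qed

sublocale gradient_rs psi r s U
proof
  show "open U" "Ck_on 1 U r" "Ck_on 1 U s" by (rule open_U r_C1 s_C1)+
next
  fix y z assume yz: "(y, z) \<in> U"
  show "1 - r y z * s y z \<noteq> 0" by (rule slopes_and_transport(1)[OF yz])
  show "pdy psi y z = (r y z + s y z) / (1 - r y z * s y z)" by (rule slopes_and_transport(2)[OF yz])
  show "pdz psi y z = (s y z - r y z) / (1 - r y z * s y z)" by (rule slopes_and_transport(3)[OF yz])
qed

lemma psi_C2: "Ck_on 2 U psi"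
proof -
  have "(\<lambda>x. C (case_prod r x) + D (case_prod s x)) differentiable (at (y, z))" if yz: "(y, z) \<in> U" for y z
  proof -
    have "C differentiable (at (r y z))" "D differentiable (at (s y z))"
      using C D rs_IJ[OF yz] by (auto simp: real_differentiable_def)
    then have "(\<lambda>x. C (case_prod r x)) differentiable (at (y, z))"
      and "(\<lambda>x. D (case_prod s x)) differentiable (at (y, z))"
      using Ck_on_1_differentiable_at[OF r_C1 open_U yz] Ck_on_1_differentiable_at[OF s_C1 open_U yz]
      by (auto intro: differentiable_compose[where f = C and g = "case_prod r"]
          differentiable_compose[where f = D and g = "case_prod s"])
    then show ?thesis by (rule differentiable_add)
  qed
  then have "(\<lambda>(y, z). C (r y z) + D (s y z)) differentiable_on U"
    using open_U by (auto simp: differentiable_on_eq_differentiable_at case_prod_beta')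
  then have "case_prod psi differentiable_on U"
    by (rule differentiable_on_cong_open[OF open_U, rotated]) (simp add: rep)
  then show ?thesis using Ck_on_1_gradient by (simp add: Ck_on_2_iff)
qed

lemma BI: "(y, z) \<in> U \<Longrightarrow> BI_eq psi y z"
  using BI_eq_iff_transport[of y z] slopes_and_transport(4,5)[of y z] by simp

end

lemma BI_representation_imp_BI_soliton:
  assumes "open U" and "param_chart U r s" and "BI_rep psi U r s F G A B C D"
  shows "Ck_on 2 U psi \<and> (\<forall>(y, z)\<in>U. BI_eq psi y z)"
proof -
  from assms(3) obtain I J where "open I" "open J" "\<forall>(y, z)\<in>U. r y z \<in> I \<and> s y z \<in> J"
    "C2_on1 I F" "C2_on1 J G"
    "\<forall>x\<in>J. (A has_real_derivative x\<^sup>2 * deriv G x) (at x)"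
    "\<forall>x\<in>I. (B has_real_derivative x\<^sup>2 * deriv F x) (at x)"
    "\<forall>x\<in>I. (C has_real_derivative x * deriv F x) (at x)"
    "\<forall>x\<in>J. (D has_real_derivative x * deriv G x) (at x)"
    "\<forall>(y, z)\<in>U. y - z = F (r y z) - A (s y z) \<and> y + z = G (s y z) - B (r y z)
        \<and> psi y z = C (r y z) + D (s y z)"
    unfolding BI_rep_def by blast
  moreover have "Ck_on 1 U r" "Ck_on 1 U s" using assms(2) by (simp_all add: param_chart_def)
  ultimately interpret BI_representation psi r s U F G A B C D I J
    using assms(1) by (unfold_locales; blast)
  show ?thesis using psi_C2 BI by blast
qed

theorem theorem5p1:
  shows
  "(\<forall>(psi :: real \<Rightarrow> real \<Rightarrow> real) \<Omega> y0 z0.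
       open \<Omega> \<and> smooth_on2 \<Omega> psi
     \<and> (\<forall>(y, z)\<in>\<Omega>. BI_eq psi y z)
     \<and> (\<forall>(y, z)\<in>\<Omega>. (pdy psi y z)\<^sup>2 - (pdz psi y z)\<^sup>2 + 1 > 0)
     \<and> (y0, z0) \<in> \<Omega> \<and> gauss_curv psi y0 z0 \<noteq> 0
     \<longrightarrow> (\<exists>U r s F G A B C D. open U \<and> (y0, z0) \<in> U \<and> U \<subseteq> \<Omega>
            \<and> param_chart U r s \<and> BI_rep psi U r s F G A B C D))
   \<and> (\<forall>(psi :: real \<Rightarrow> real \<Rightarrow> real) U r s F G A B C D.
       open U \<and> param_chart U r s \<and> BI_rep psi U r s F G A B C D
     \<longrightarrow> Ck_on 2 U psi \<and> (\<forall>(y, z)\<in>U. BI_eq psi y z))"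
proof (rule conjI; intro allI impI)
  fix psi :: "real \<Rightarrow> real \<Rightarrow> real" and \<Omega> y0 z0
  assume "open \<Omega> \<and> smooth_on2 \<Omega> psi
     \<and> (\<forall>(y, z)\<in>\<Omega>. BI_eq psi y z)
     \<and> (\<forall>(y, z)\<in>\<Omega>. (pdy psi y z)\<^sup>2 - (pdz psi y z)\<^sup>2 + 1 > 0)
     \<and> (y0, z0) \<in> \<Omega> \<and> gauss_curv psi y0 z0 \<noteq> 0"
  then show "\<exists>U r s F G A B C D. open U \<and> (y0, z0) \<in> U \<and> U \<subseteq> \<Omega>
      \<and> param_chart U r s \<and> BI_rep psi U r s F G A B C D"
    using BI_soliton_local_representation by blast
next
  fix psi :: "real \<Rightarrow> real \<Rightarrow> real" and U r s F G A B C D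
  assume "open U \<and> param_chart U r s \<and> BI_rep psi U r s F G A B C D"
  then show "Ck_on 2 U psi \<and> (\<forall>(y, z)\<in>U. BI_eq psi y z)"
    using BI_representation_imp_BI_soliton by blast
qed

end
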